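(* In the setting described in the context, the following are equivalent: (a) Condition [A] holds; (b) Condition $[A']_r$ holds for some $r>0$; (c) Condition $[A']_r$ holds for every $r>0$.
   Context: $\mathbb W$ isonormal Gaussian process on $\mathfrak H=L^2(\mathbb R_+)$ on $(\Omega,\mathcal F,P)$; $D$, $\mathbb D^\infty$, $I_q$, $D_{t_i}\cdots D_{t_1}F$ densities of $D^iF$, $D_hF=\langle DF,h\rangle$. $t_j=j/n$, $I_j=[t_{j-1},t_j]$, $1_j=1_{I_j}$, $\mathbb J_n=\{1,\dots,n\}$. $\mathcal Q\subset\{2,3,\dots\}$ finite, $a_j(q)=a^n_j(q)$ random variables, $X_\infty$ a random variable, and fixed measurable random fields $a(t,q),\mathring a(t,s,q),\mathring{\mathring a}(t,s,q)$ ($q\in\mathcal Q$; $t,s\in[0,1]$) and, if $2\in\mathcal Q$, $\dot a(t,2),\ddot a(t,2)$; $G_\infty=\sum_qq!\int_0^1a(t,q)^2dt$. Common conditions: (C1) $a_j(q)\in\mathbb D^\infty$, $\sup_n\sup_j\sup_{t_1..t_i\in[0,1]}\|D_{t_i}\cdots D_{t_1}a_j(q)\|_p<\infty$ ($i\in\mathbb Z_+,p>1,q$). (C2) $G_\infty\in\mathbb D^\infty$, $\sup_{t_1..t_i}\|D_{t_i}\cdots D_{t_1}G_\infty\|_p<\infty$ ($i\in\mathbb N,p>1$), and $n^{-1}\sum_j\sum_qq!a_j(q)^2-G_\infty=o_p(n^{-1/2})$. (C3) $X_\infty\in\mathbb D^\infty$, $\sup_{t_1..t_i}\|D_{t_i}\cdots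 D_{t_1}X_\infty\|_p<\infty$, and a measurable process $\ddot X_\infty(t)$ with $E[\int_0^11_{\{|\sum_j1_{I_j}(t)n^2D_{1_j}D_{1_j}X_\infty-\ddot X_\infty(t)|>\epsilon\}}dt]\to0$ for all $\epsilon>0$. Condition [A]: (C1),(C2),(C3) and, for all $\epsilon>0$ and $q\in\mathcal Q$, as $n\to\infty$: $E[\int_0^11_{\{|\sum_j1_{I_j}(s)a_j(q)-a(s,q)|>\epsilon\}}ds]\to0$; $E[\int_{[0,1]^2}1_{\{|\sum_{j,k}1_{I_k\times I_j}(t,s)nD_{1_k}a_j(q)-\mathring a(t,s,q)|>\epsilon\}}dsdt]\to0$; if $2\in\mathcal Q$, $E[\int_0^11_{\{|\sum_k1_{I_k}(t)nD_{1_k}a_k(2)-\dot a(t,2)|>\epsilon\}}dt]\to0$; $E[\int_{[0,1]^2}1_{\{|\sum_{j,k}1_{I_k\times I_j}(t,s)n^2D_{1_k}D_{1_k}a_j(q)-\mathring{\mathring a}(t,s,q)|>\epsilon\}}dsdt]\to0$; if $2\in\mathcal Q$, $E[\int_{[0,1]^2}1_{\{|\sum_j1_{I_j}(t)n^2D_{1_j}D_{1_j}a_j(2)-\ddot a(t,2)|>\epsilon\}}dsdt]\to0$. Condition $[A']_r$ ($r>0$): (C1),(C2),(C3) and, for every $q\in\mathcal Q$, as $n\to\infty$, in probability: $\sum_j\int_0^11_{I_j}(s)|a_j(q)-a(s,q)|^rds\to0$; $\sum_{j,k}\int_0^1\int_0^11_{I_k\times I_j}(t,s)|nD_{1_k}a_j(q)-\mathring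 a(t,s,q)|^rdsdt\to0$; if $2\in\mathcal Q$, $\sum_k\int_0^11_{I_k}(t)|nD_{1_k}a_k(2)-\dot a(t,2)|^rdt\to0$; $\sum_{j,k}\int_{[0,1]^2}1_{I_k\times I_j}(t,s)|n^2D_{1_k}D_{1_k}a_j(q)-\mathring{\mathring a}(t,s,q)|^rdsdt\to0$; if $2\in\mathcal Q$, $\sum_j\int_0^11_{I_j}(t)|n^2D_{1_j}D_{1_j}a_j(2)-\ddot a(t,2)|^rdt\to0$. *)

theory Defs
  imports "HOL-Probability.Probability"
begin

section \<open>Isonormal Gaussian process on L2(R+)\<close>

text \<open>Elements of the Hilbert space L2(R+) are represented by real functions
  that are Borel measurable and square integrable on [0,infinity).\<close>

definition L2plus :: "(real \<Rightarrow> real) \<Rightarrow> bool" where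
  "L2plus h \<longleftrightarrow> h \<in> borel_measurable lborel \<and>
     integrable lborel (\<lambda>t. indicator {0..} t * (h t)\<^sup>2)"

definition sqnorm_L2plus :: "(real \<Rightarrow> real) \<Rightarrow> real" where
  "sqnorm_L2plus h = (\<integral>t. indicator {0..} t * (h t)\<^sup>2 \<partial>lborel)"

definition centered_gaussian :: "'a measure \<Rightarrow> ('a \<Rightarrow> real) \<Rightarrow> real \<Rightarrow> bool" where
  "centered_gaussian M X v \<longleftrightarrow>
     (if v = 0 then (AE \<omega> in M. X \<omega> = 0)
      else distributed M lborel X (\<lambda>x. ennreal (normal_density 0 (sqrt v) x)))"

text \<open>Isonormal Gaussian process: linear (a.s.) and each W(h) centered Gaussian
  with variance the squared L2 norm of h (this implies joint Gaussianity with
  covariance the inner product).\<close>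
definition isonormal :: "'a measure \<Rightarrow> ((real \<Rightarrow> real) \<Rightarrow> 'a \<Rightarrow> real) \<Rightarrow> bool" where
  "isonormal M W \<longleftrightarrow>
     (\<forall>h. L2plus h \<longrightarrow> W h \<in> borel_measurable M \<and> centered_gaussian M (W h) (sqnorm_L2plus h)) \<and>
     (\<forall>h g (\<alpha>::real) (\<beta>::real). L2plus h \<longrightarrow> L2plus g \<longrightarrow>
        (AE \<omega> in M. W (\<lambda>t. \<alpha> * h t + \<beta> * g t) \<omega> = \<alpha> * W h \<omega> + \<beta> * W g \<omega>))"

section \<open>Polynomial functionals and their Malliavin derivatives\<close>

text \<open>A polynomial functional is a finite linear combination of products
  W(h_1)...W(h_m); it is represented by a list of (coefficient, list of h's).\<close>
type_synonym poly_rep = "(real \<times> (real \<Rightarrow> real) list) list"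

definition valid_rep :: "poly_rep \<Rightarrow> bool" where
  "valid_rep R \<longleftrightarrow> (\<forall>(c, hs) \<in> set R. \<forall>h \<in> set hs. L2plus h)"

definition poly_val :: "((real \<Rightarrow> real) \<Rightarrow> 'a \<Rightarrow> real) \<Rightarrow> poly_rep \<Rightarrow> 'a \<Rightarrow> real" where
  "poly_val W R \<omega> = sum_list (map (\<lambda>(c, hs). c * prod_list (map (\<lambda>h. W h \<omega>) hs)) R)"

text \<open>Density of the k-th Malliavin derivative of a polynomial functional at
  (t_1,...,t_k) = (ts 0, ..., ts (k-1)):
  D^k (W(h_0)...W(h_{m-1})) = sum over injective s of prod_{j not in range s} W(h_j) *
  h_{s 0}(t_1) ... h_{s (k-1)}(t_k).\<close>
definition poly_deriv :: "((real \<Rightarrow> real) \<Rightarrow> 'a \<Rightarrow> real) \<Rightarrow> poly_rep \<Rightarrow> nat \<Rightarrow> (nat \<Rightarrow> real) \<Rightarrow> 'a \<Rightarrow> real" where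
  "poly_deriv W R k ts \<omega> = sum_list (map (\<lambda>(c, hs). c *
      (\<Sum>\<sigma>\<in>{\<sigma> \<in> {..<k} \<rightarrow>\<^sub>E {..<length hs}. inj_on \<sigma> {..<k}}.
          (\<Prod>j\<in>{..<length hs} - \<sigma> ` {..<k}. W (hs ! j) \<omega>) * (\<Prod>l<k. (hs ! \<sigma> l) (ts l)))) R)"

definition Pt :: "nat \<Rightarrow> (nat \<Rightarrow> real) measure" where
  "Pt k = PiM {..<k} (\<lambda>_. restrict_space lborel {0..})"

definition ennpow :: "ennreal \<Rightarrow> real \<Rightarrow> ennreal" where
  "ennpow x e = (if x = \<top> then \<top> else ennreal (enn2real x powr e))"

definition pmoment :: "'a measure \<Rightarrow> real \<Rightarrow> ('a \<Rightarrow> real) \<Rightarrow> ennreal" where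
  "pmoment M p X = (\<integral>\<^sup>+\<omega>. ennreal (\<bar>X \<omega>\<bar> powr p) \<partial>M)"

text \<open>p-th power of the L^p(Omega; L2(R+^k)) distance.\<close>
definition Lp_L2_dist :: "'a measure \<Rightarrow> real \<Rightarrow> nat \<Rightarrow> ((nat \<Rightarrow> real) \<Rightarrow> 'a \<Rightarrow> real)
    \<Rightarrow> ((nat \<Rightarrow> real) \<Rightarrow> 'a \<Rightarrow> real) \<Rightarrow> ennreal" where
  "Lp_L2_dist M p k G1 G2 =
     (\<integral>\<^sup>+\<omega>. ennpow (\<integral>\<^sup>+ts. ennreal ((G1 ts \<omega> - G2 ts \<omega>)\<^sup>2) \<partial>Pt k) (p / 2) \<partial>M)"

text \<open>D^infinity = intersection over k, p of D^{k,p}, where D^{k,p} is the closure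
  of the polynomial functionals w.r.t. the norm
  (E|F|^p + sum_{j\<le>k} E||D^j F||^p)^{1/p}.\<close>
definition in_Dinf :: "'a measure \<Rightarrow> ((real \<Rightarrow> real) \<Rightarrow> 'a \<Rightarrow> real) \<Rightarrow> ('a \<Rightarrow> real) \<Rightarrow> bool" where
  "in_Dinf M W F \<longleftrightarrow> F \<in> borel_measurable M \<and>
     (\<forall>k::nat. \<forall>p::real. p \<ge> 1 \<longrightarrow>
        (\<exists>R::nat \<Rightarrow> poly_rep. (\<forall>m. valid_rep (R m)) \<and>
           ((\<lambda>m. pmoment M p (\<lambda>\<omega>. poly_val W (R m) \<omega> - F \<omega>)) \<longlonglongrightarrow> 0) \<and>
           (\<forall>j\<in>{1..k}. \<exists>G. (\<lambda>(ts, \<omega>). G ts \<omega>) \<in> borel_measurable (Pt j \<Otimes>\<^sub>M M) \<and>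
               ((\<lambda>m. Lp_L2_dist M p j (poly_deriv W (R m) j) G) \<longlonglongrightarrow> 0))))"

text \<open>G is a (jointly measurable) version of the density (t_1..t_i) \<mapsto> D_{t_i}...D_{t_1}F,
  i.e. the limit of D^i of approximating polynomial functionals (D^i is closable,
  so G is unique a.e.).\<close>
definition malliavin_density :: "'a measure \<Rightarrow> ((real \<Rightarrow> real) \<Rightarrow> 'a \<Rightarrow> real) \<Rightarrow> ('a \<Rightarrow> real)
    \<Rightarrow> nat \<Rightarrow> ((nat \<Rightarrow> real) \<Rightarrow> 'a \<Rightarrow> real) \<Rightarrow> bool" where
  "malliavin_density M W F i G \<longleftrightarrow>
     (\<lambda>(ts, \<omega>). G ts \<omega>) \<in> borel_measurable (Pt i \<Otimes>\<^sub>M M) \<and>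
     (\<exists>p::real. p \<ge> 1 \<and> (\<exists>R::nat \<Rightarrow> poly_rep. (\<forall>m. valid_rep (R m)) \<and>
        ((\<lambda>m. pmoment M p (\<lambda>\<omega>. poly_val W (R m) \<omega> - F \<omega>)) \<longlonglongrightarrow> 0) \<and>
        ((\<lambda>m. Lp_L2_dist M p i (poly_deriv W (R m) i) G) \<longlonglongrightarrow> 0)))"

section \<open>Discretisation\<close>

definition Iv :: "nat \<Rightarrow> nat \<Rightarrow> real set" where
  "Iv n j = {(real j - 1) / real n .. real j / real n}"

definition cube :: "nat \<Rightarrow> (nat \<Rightarrow> real) set" where
  "cube i = PiE {..<i} (\<lambda>_. {0..1})"

text \<open>D_{1_k} F = <DF, 1_{I_k}>, computed from a density G of DF.\<close>
definition D1 :: "nat \<Rightarrow> nat \<Rightarrow> ((nat \<Rightarrow> real) \<Rightarrow> 'a \<Rightarrow> real) \<Rightarrow> 'a \<Rightarrow> real" where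
  "D1 n k G \<omega> = (\<integral>ts. indicator (Iv n k) (ts 0) * G ts \<omega> \<partial>Pt 1)"

text \<open>D_{1_k} D_{1_k} F = <D^2 F, 1_{I_k} \<otimes> 1_{I_k}>, from a density G of D^2 F.\<close>
definition D11 :: "nat \<Rightarrow> nat \<Rightarrow> ((nat \<Rightarrow> real) \<Rightarrow> 'a \<Rightarrow> real) \<Rightarrow> 'a \<Rightarrow> real" where
  "D11 n k G \<omega> = (\<integral>ts. indicator (Iv n k) (ts 0) * indicator (Iv n k) (ts 1) * G ts \<omega> \<partial>Pt 2)"

definition conv_prob :: "'a measure \<Rightarrow> (nat \<Rightarrow> 'a \<Rightarrow> real) \<Rightarrow> bool" where
  "conv_prob M Y \<longleftrightarrow> (\<forall>\<epsilon>>0. (\<lambda>n. measure M {\<omega>\<in>space M. \<epsilon> < \<bar>Y n \<omega>\<bar>}) \<longlonglongrightarrow> 0)"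

definition conv_prob_enn :: "'a measure \<Rightarrow> (nat \<Rightarrow> 'a \<Rightarrow> ennreal) \<Rightarrow> bool" where
  "conv_prob_enn M Y \<longleftrightarrow> (\<forall>\<epsilon>::real>0. (\<lambda>n. measure M {\<omega>\<in>space M. ennreal \<epsilon> < Y n \<omega>}) \<longlonglongrightarrow> 0)"

text \<open>a n j q = a^n_j(q); Da n j q i ts = D_{t_i}...D_{t_1} a^n_j(q) with t_l = ts (l-1).\<close>
definition cond_C1 :: "'a measure \<Rightarrow> ((real \<Rightarrow> real) \<Rightarrow> 'a \<Rightarrow> real) \<Rightarrow> nat set
    \<Rightarrow> (nat \<Rightarrow> nat \<Rightarrow> nat \<Rightarrow> 'a \<Rightarrow> real)
    \<Rightarrow> (nat \<Rightarrow> nat \<Rightarrow> nat \<Rightarrow> nat \<Rightarrow> (nat \<Rightarrow> real) \<Rightarrow> 'a \<Rightarrow> real) \<Rightarrow> bool" where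
  "cond_C1 M W Q a Da \<longleftrightarrow>
     (\<forall>n j q. j \<in> {1..n} \<longrightarrow> q \<in> Q \<longrightarrow> in_Dinf M W (a n j q)) \<and>
     (\<forall>i::nat. \<forall>p::real. \<forall>q\<in>Q. p > 1 \<longrightarrow>
        (\<exists>C::real. \<forall>n j. j \<in> {1..n} \<longrightarrow> (\<forall>ts\<in>cube i. pmoment M p (Da n j q i ts) \<le> ennreal C)))"

definition cond_C2 :: "'a measure \<Rightarrow> ((real \<Rightarrow> real) \<Rightarrow> 'a \<Rightarrow> real) \<Rightarrow> nat set
    \<Rightarrow> (nat \<Rightarrow> nat \<Rightarrow> nat \<Rightarrow> 'a \<Rightarrow> real) \<Rightarrow> ('a \<Rightarrow> real)
    \<Rightarrow> (nat \<Rightarrow> (nat \<Rightarrow> real) \<Rightarrow> 'a \<Rightarrow> real) \<Rightarrow> bool" where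
  "cond_C2 M W Q a Ginf DG \<longleftrightarrow>
     in_Dinf M W Ginf \<and>
     (\<forall>i::nat. \<forall>p::real. i \<ge> 1 \<longrightarrow> p > 1 \<longrightarrow>
        (\<exists>C::real. \<forall>ts\<in>cube i. pmoment M p (DG i ts) \<le> ennreal C)) \<and>
     conv_prob M (\<lambda>n \<omega>. sqrt (real n) *
        ((1 / real n) * (\<Sum>j=1..n. \<Sum>q\<in>Q. fact q * (a n j q \<omega>)\<^sup>2) - Ginf \<omega>))"

definition cond_C3 :: "'a measure \<Rightarrow> ((real \<Rightarrow> real) \<Rightarrow> 'a \<Rightarrow> real) \<Rightarrow> ('a \<Rightarrow> real)
    \<Rightarrow> (nat \<Rightarrow> (nat \<Rightarrow> real) \<Rightarrow> 'a \<Rightarrow> real) \<Rightarrow> bool" where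
  "cond_C3 M W X DX \<longleftrightarrow>
     in_Dinf M W X \<and>
     (\<forall>i::nat. \<forall>p::real. p > 1 \<longrightarrow>
        (\<exists>C::real. \<forall>ts\<in>cube i. pmoment M p (DX i ts) \<le> ennreal C)) \<and>
     (\<exists>Xdd :: real \<Rightarrow> 'a \<Rightarrow> real.
        (\<lambda>(t, \<omega>). Xdd t \<omega>) \<in> borel_measurable (lborel \<Otimes>\<^sub>M M) \<and>
        (\<forall>\<epsilon>::real>0. (\<lambda>n. \<integral>\<^sup>+\<omega>. (\<integral>\<^sup>+t\<in>{0..1}. of_bool (\<epsilon> <
            \<bar>(\<Sum>j=1..n. indicator (Iv n j) t * ((real n)\<^sup>2 * D11 n j (DX 2) \<omega>)) - Xdd t \<omega>\<bar>) \<partial>lborel) \<partial>M)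
          \<longlonglongrightarrow> 0))"

text \<open>Condition [A].  af = a(t,q), ar = ring-a(t,s,q), arr = double-ring-a(t,s,q),
  ad = dot-a(t,2), add = double-dot-a(t,2).\<close>
definition cond_A :: "'a measure \<Rightarrow> ((real \<Rightarrow> real) \<Rightarrow> 'a \<Rightarrow> real) \<Rightarrow> nat set
    \<Rightarrow> (nat \<Rightarrow> nat \<Rightarrow> nat \<Rightarrow> 'a \<Rightarrow> real)
    \<Rightarrow> (nat \<Rightarrow> nat \<Rightarrow> nat \<Rightarrow> nat \<Rightarrow> (nat \<Rightarrow> real) \<Rightarrow> 'a \<Rightarrow> real)
    \<Rightarrow> ('a \<Rightarrow> real) \<Rightarrow> (nat \<Rightarrow> (nat \<Rightarrow> real) \<Rightarrow> 'a \<Rightarrow> real)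
    \<Rightarrow> ('a \<Rightarrow> real) \<Rightarrow> (nat \<Rightarrow> (nat \<Rightarrow> real) \<Rightarrow> 'a \<Rightarrow> real)
    \<Rightarrow> (real \<Rightarrow> nat \<Rightarrow> 'a \<Rightarrow> real) \<Rightarrow> (real \<Rightarrow> real \<Rightarrow> nat \<Rightarrow> 'a \<Rightarrow> real)
    \<Rightarrow> (real \<Rightarrow> real \<Rightarrow> nat \<Rightarrow> 'a \<Rightarrow> real) \<Rightarrow> (real \<Rightarrow> 'a \<Rightarrow> real) \<Rightarrow> (real \<Rightarrow> 'a \<Rightarrow> real)
    \<Rightarrow> bool" where
  "cond_A M W Q a Da Ginf DG X DX af ar arr ad add \<longleftrightarrow>
     cond_C1 M W Q a Da \<and> cond_C2 M W Q a Ginf DG \<and> cond_C3 M W X DX \<and>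
     (\<forall>\<epsilon>::real>0. \<forall>q\<in>Q.
        ((\<lambda>n. \<integral>\<^sup>+\<omega>. (\<integral>\<^sup>+s\<in>{0..1}. of_bool (\<epsilon> <
            \<bar>(\<Sum>j=1..n. indicator (Iv n j) s * a n j q \<omega>) - af s q \<omega>\<bar>) \<partial>lborel) \<partial>M) \<longlonglongrightarrow> 0) \<and>
        ((\<lambda>n. \<integral>\<^sup>+\<omega>. (\<integral>\<^sup>+t\<in>{0..1}. (\<integral>\<^sup>+s\<in>{0..1}. of_bool (\<epsilon> <
            \<bar>(\<Sum>j=1..n. \<Sum>k=1..n. indicator (Iv n k) t * indicator (Iv n j) s *
                (real n * D1 n k (Da n j q 1) \<omega>)) - ar t s q \<omega>\<bar>) \<partial>lborel) \<partial>lborel) \<partial>M) \<longlonglongrightarrow> 0) \<and>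
        (2 \<in> Q \<longrightarrow> ((\<lambda>n. \<integral>\<^sup>+\<omega>. (\<integral>\<^sup>+t\<in>{0..1}. of_bool (\<epsilon> <
            \<bar>(\<Sum>k=1..n. indicator (Iv n k) t * (real n * D1 n k (Da n k 2 1) \<omega>)) - ad t \<omega>\<bar>) \<partial>lborel) \<partial>M)
            \<longlonglongrightarrow> 0)) \<and>
        ((\<lambda>n. \<integral>\<^sup>+\<omega>. (\<integral>\<^sup>+t\<in>{0..1}. (\<integral>\<^sup>+s\<in>{0..1}. of_bool (\<epsilon> <
            \<bar>(\<Sum>j=1..n. \<Sum>k=1..n. indicator (Iv n k) t * indicator (Iv n j) s *
                ((real n)\<^sup>2 * D11 n k (Da n j q 2) \<omega>)) - arr t s q \<omega>\<bar>) \<partial>lborel) \<partial>lborel) \<partial>M) \<longlonglongrightarrow> 0) \<and>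
        (2 \<in> Q \<longrightarrow> ((\<lambda>n. \<integral>\<^sup>+\<omega>. (\<integral>\<^sup>+t\<in>{0..1}. (\<integral>\<^sup>+(s::real)\<in>{0..1}. of_bool (\<epsilon> <
            \<bar>(\<Sum>j=1..n. indicator (Iv n j) t * ((real n)\<^sup>2 * D11 n j (Da n j 2 2) \<omega>)) - add t \<omega>\<bar>)
               \<partial>lborel) \<partial>lborel) \<partial>M) \<longlonglongrightarrow> 0)))"

definition cond_A' :: "real \<Rightarrow> 'a measure \<Rightarrow> ((real \<Rightarrow> real) \<Rightarrow> 'a \<Rightarrow> real) \<Rightarrow> nat set
    \<Rightarrow> (nat \<Rightarrow> nat \<Rightarrow> nat \<Rightarrow> 'a \<Rightarrow> real)
    \<Rightarrow> (nat \<Rightarrow> nat \<Rightarrow> nat \<Rightarrow> nat \<Rightarrow> (nat \<Rightarrow> real) \<Rightarrow> 'a \<Rightarrow> real)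
    \<Rightarrow> ('a \<Rightarrow> real) \<Rightarrow> (nat \<Rightarrow> (nat \<Rightarrow> real) \<Rightarrow> 'a \<Rightarrow> real)
    \<Rightarrow> ('a \<Rightarrow> real) \<Rightarrow> (nat \<Rightarrow> (nat \<Rightarrow> real) \<Rightarrow> 'a \<Rightarrow> real)
    \<Rightarrow> (real \<Rightarrow> nat \<Rightarrow> 'a \<Rightarrow> real) \<Rightarrow> (real \<Rightarrow> real \<Rightarrow> nat \<Rightarrow> 'a \<Rightarrow> real)
    \<Rightarrow> (real \<Rightarrow> real \<Rightarrow> nat \<Rightarrow> 'a \<Rightarrow> real) \<Rightarrow> (real \<Rightarrow> 'a \<Rightarrow> real) \<Rightarrow> (real \<Rightarrow> 'a \<Rightarrow> real)
    \<Rightarrow> bool" where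
  "cond_A' r M W Q a Da Ginf DG X DX af ar arr ad add \<longleftrightarrow>
     cond_C1 M W Q a Da \<and> cond_C2 M W Q a Ginf DG \<and> cond_C3 M W X DX \<and>
     (\<forall>q\<in>Q.
        conv_prob_enn M (\<lambda>n \<omega>. \<Sum>j=1..n. \<integral>\<^sup>+s\<in>{0..1}.
            ennreal (indicator (Iv n j) s * \<bar>a n j q \<omega> - af s q \<omega>\<bar> powr r) \<partial>lborel) \<and>
        conv_prob_enn M (\<lambda>n \<omega>. \<Sum>j=1..n. \<Sum>k=1..n. \<integral>\<^sup>+t\<in>{0..1}. \<integral>\<^sup>+s\<in>{0..1}.
            ennreal (indicator (Iv n k) t * indicator (Iv n j) s *
              \<bar>real n * D1 n k (Da n j q 1) \<omega> - ar t s q \<omega>\<bar> powr r) \<partial>lborel \<partial>lborel) \<and>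
        (2 \<in> Q \<longrightarrow> conv_prob_enn M (\<lambda>n \<omega>. \<Sum>k=1..n. \<integral>\<^sup>+t\<in>{0..1}.
            ennreal (indicator (Iv n k) t *
              \<bar>real n * D1 n k (Da n k 2 1) \<omega> - ad t \<omega>\<bar> powr r) \<partial>lborel)) \<and>
        conv_prob_enn M (\<lambda>n \<omega>. \<Sum>j=1..n. \<Sum>k=1..n. \<integral>\<^sup>+t\<in>{0..1}. \<integral>\<^sup>+s\<in>{0..1}.
            ennreal (indicator (Iv n k) t * indicator (Iv n j) s *
              \<bar>(real n)\<^sup>2 * D11 n k (Da n j q 2) \<omega> - arr t s q \<omega>\<bar> powr r) \<partial>lborel \<partial>lborel) \<and>
        (2 \<in> Q \<longrightarrow> conv_prob_enn M (\<lambda>n \<omega>. \<Sum>j=1..n. \<integral>\<^sup>+t\<in>{0..1}.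
            ennreal (indicator (Iv n j) t *
              \<bar>(real n)\<^sup>2 * D11 n j (Da n j 2 2) \<omega> - add t \<omega>\<bar> powr r) \<partial>lborel)))"

end

theory Submission
  imports Defs
begin

text \<open>Both conditions compare step functions built from a_j(q), n D_{1_k} a_j(q) and
  n^2 D_{1_k} D_{1_k} a_j(q) on the grid of [0,1] or [0,1]^2 with their limits: [A] asks for
  convergence in measure on \<Omega> \<times> [0,1]^d, [A']_r for convergence in probability of the
  L^r([0,1]^d) distances. The second implies the first for every r by Chebyshev's inequality
  on [0,1]^d. Conversely, (C1) bounds all moments of the step functions uniformly (for the
  derivatives via Jensen's inequality on the grid cells), hence, by a Fatou argument, also those
  of the limit; convergence in measure together with bounded higher moments gives convergence
  in L^r(\<Omega> \<times> [0,1]^d), and Markov's inequality then gives [A']_r.\<close>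

lemma abs_add_power_le: "\<bar>x + y\<bar> ^ N \<le> 2 ^ N * (\<bar>x\<bar> ^ N + \<bar>y\<bar> ^ N)" for x y :: real
proof -
  have "\<bar>x + y\<bar> ^ N \<le> (2 * max \<bar>x\<bar> \<bar>y\<bar>) ^ N" by (intro power_mono) auto
  also have "\<dots> = 2 ^ N * max \<bar>x\<bar> \<bar>y\<bar> ^ N" by (simp add: power_mult_distrib)
  also have "max \<bar>x\<bar> \<bar>y\<bar> ^ N \<le> \<bar>x\<bar> ^ N + \<bar>y\<bar> ^ N" by (auto simp: max_def)
  finally show ?thesis by simp
qed

lemma abs_add_powr_le:
  "0 \<le> p \<Longrightarrow> \<bar>x + y\<bar> powr p \<le> 2 powr p * (\<bar>x\<bar> powr p + \<bar>y\<bar> powr p)" for x y p :: real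
proof -
  assume "0 \<le> p"
  then have "\<bar>x + y\<bar> powr p \<le> (2 * max \<bar>x\<bar> \<bar>y\<bar>) powr p" by (intro powr_mono2) auto
  also have "\<dots> = 2 powr p * max \<bar>x\<bar> \<bar>y\<bar> powr p" by (simp add: powr_mult)
  also have "max \<bar>x\<bar> \<bar>y\<bar> powr p \<le> \<bar>x\<bar> powr p + \<bar>y\<bar> powr p" by (auto simp: max_def)
  finally show ?thesis by simp
qed

lemma abs_power_le_one_plus: "p \<le> q \<Longrightarrow> \<bar>x\<bar> ^ p \<le> 1 + \<bar>x\<bar> ^ q" for x :: real
proof (cases "\<bar>x\<bar> \<le> 1")
  case True
  then show ?thesis by (simp add: power_le_one add_increasing2)
next
  case False
  moreover assume "p \<le> q"
  ultimately show ?thesis by (smt (verit) power_increasing zero_le_power)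
qed

lemma abs_powr_le_truncation:
  fixes v d K r :: real and N :: nat
  assumes "0 < d" "d \<le> K" "0 < r" "r < N"
  shows "\<bar>v\<bar> powr r \<le> d powr r + K powr r * of_bool (d < \<bar>v\<bar>) + \<bar>v\<bar> ^ N / K powr (N - r)"
proof -
  consider "\<bar>v\<bar> \<le> d" | "d < \<bar>v\<bar>" "\<bar>v\<bar> \<le> K" | "K < \<bar>v\<bar>" by linarith
  then show ?thesis
  proof cases
    case 1
    then have "\<bar>v\<bar> powr r \<le> d powr r" using assms by (intro powr_mono2) auto
    then show ?thesis by (simp add: add_increasing2)
  next
    case 2
    then have "\<bar>v\<bar> powr r \<le> K powr r" using assms by (intro powr_mono2) auto
    moreover have "0 \<le> d powr r" "0 \<le> \<bar>v\<bar> ^ N / K powr (N - r)" by auto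
    moreover have "K powr r * of_bool (d < \<bar>v\<bar>) = K powr r" using 2 by simp
    ultimately show ?thesis by linarith
  next
    case 3
    have "\<bar>v\<bar> ^ N = \<bar>v\<bar> powr r * \<bar>v\<bar> powr (N - r)"
      using 3 assms by (simp add: powr_realpow[symmetric] powr_add[symmetric])
    moreover have "K powr (N - r) \<le> \<bar>v\<bar> powr (N - r)" using 3 assms by (intro powr_mono2) auto
    ultimately have "\<bar>v\<bar> powr r \<le> \<bar>v\<bar> ^ N / K powr (N - r)"
      using assms by (simp add: field_simps mult_left_mono)
    then show ?thesis by (simp add: add_increasing)
  qed
qed

lemma min_abs_power_le:
  fixes y z K :: real
  assumes "0 \<le> K"
  shows "min \<bar>y\<bar> K ^ N \<le> 2 ^ N * \<bar>z\<bar> ^ N + 2 ^ N + K ^ N * of_bool (1 < \<bar>z - y\<bar>)"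
proof (cases "1 < \<bar>z - y\<bar>")
  case True
  have "min \<bar>y\<bar> K ^ N \<le> K ^ N" using assms by (intro power_mono) auto
  moreover have "0 \<le> (2::real) ^ N * \<bar>z\<bar> ^ N + 2 ^ N" by simp
  moreover have "K ^ N * of_bool (1 < \<bar>z - y\<bar>) = K ^ N" using True by simp
  ultimately show ?thesis by linarith
next
  case False
  then have "min \<bar>y\<bar> K ^ N \<le> (\<bar>z\<bar> + 1) ^ N" using assms by (intro power_mono) auto
  also have "\<dots> \<le> 2 ^ N * (\<bar>z\<bar> ^ N + 1)" using abs_add_power_le[of "\<bar>z\<bar>" 1 N] by simp
  finally show ?thesis using False by (simp add: algebra_simps)
qed

lemma SUP_min_power: "(SUP K::nat. ennreal (min \<bar>y\<bar> (real K) ^ N)) = ennreal (\<bar>y\<bar> ^ N)"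
proof (rule antisym)
  show "(SUP K::nat. ennreal (min \<bar>y\<bar> (real K) ^ N)) \<le> ennreal (\<bar>y\<bar> ^ N)"
    by (intro SUP_least ennreal_leI power_mono) auto
  obtain K :: nat where "\<bar>y\<bar> \<le> real K" using real_arch_simple by blast
  then show "ennreal (\<bar>y\<bar> ^ N) \<le> (SUP K::nat. ennreal (min \<bar>y\<bar> (real K) ^ N))"
    by (intro SUP_upper2[of K]) auto
qed

lemma power_ge_tangent:
  fixes y c :: real
  assumes "0 \<le> y" "0 \<le> c" "1 \<le> p"
  shows "c ^ p + real p * c ^ (p - 1) * (y - c) \<le> y ^ p"
proof (cases "c = 0")
  case True
  then show ?thesis using assms by (cases "p = 1") (simp_all add: power_0_left)
next
  case False
  then have c: "c > 0" using assms by simp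
  have "-1 \<le> y / c - 1" using assms c by simp
  from Bernoulli_inequality[OF this, of p]
  have "c ^ p * (1 + real p * (y / c - 1)) \<le> c ^ p * (y / c) ^ p"
    using c by (intro mult_left_mono) auto
  moreover have "c ^ p * (y / c) ^ p = y ^ p" using c by (simp add: power_divide)
  moreover have "c ^ p * (1 + real p * (y / c - 1)) = c ^ p + real p * c ^ (p - 1) * (y - c)"
  proof -
    have "c ^ p = c * c ^ (p - 1)" using assms by (simp add: power_eq_if)
    then show ?thesis using c by (simp add: field_simps)
  qed
  ultimately show ?thesis by simp
qed

lemma ennreal_tendsto_0I:
  fixes x :: "nat \<Rightarrow> ennreal"
  assumes "\<And>\<delta>. \<delta> > 0 \<Longrightarrow> eventually (\<lambda>n. x n \<le> ennreal \<delta>) sequentially"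
  shows "x \<longlonglongrightarrow> 0"
proof (rule order_tendstoI)
  fix a :: ennreal assume a: "0 < a"
  then obtain b where b: "0 < b" "b < a" using dense by blast
  define \<delta> where "\<delta> = enn2real (min b 1)"
  have "min b 1 < top" by (metis min.cobounded2 ennreal_one_less_top order.strict_trans1)
  then have \<delta>: "ennreal \<delta> = min b 1" unfolding \<delta>_def by (simp add: ennreal_enn2real)
  have "\<delta> > 0" using b \<delta> by (metis ennreal_eq_0_iff less_le min_less_iff_conj not_le zero_less_one)
  then have "eventually (\<lambda>n. x n \<le> ennreal \<delta>) sequentially" by (rule assms)
  then show "eventually (\<lambda>n. x n < a) sequentially"
    by eventually_elim (use \<delta> b in \<open>auto simp: min_def split: if_splits\<close>)
qed simp

subsection \<open>Convergence in measure and moments\<close>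

lemma nn_integral_exceed_le_powr:
  assumes [measurable]: "v \<in> borel_measurable M" and "0 < \<epsilon>" "0 < r"
  shows "(\<integral>\<^sup>+x. of_bool (\<epsilon> < \<bar>v x\<bar>) \<partial>M) \<le> ennreal (1 / \<epsilon> powr r) * (\<integral>\<^sup>+x. ennreal (\<bar>v x\<bar> powr r) \<partial>M)"
proof -
  have "of_bool (\<epsilon> < \<bar>v x\<bar>) \<le> ennreal (1 / \<epsilon> powr r) * ennreal (\<bar>v x\<bar> powr r)" for x
  proof (cases "\<epsilon> < \<bar>v x\<bar>")
    case True
    then have "\<epsilon> powr r \<le> \<bar>v x\<bar> powr r" using assms by (intro powr_mono2) auto
    then have "ennreal 1 \<le> ennreal (1 / \<epsilon> powr r * \<bar>v x\<bar> powr r)"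
      using assms by (intro ennreal_leI) (simp add: field_simps)
    also have "\<dots> = ennreal (1 / \<epsilon> powr r) * ennreal (\<bar>v x\<bar> powr r)" by (rule ennreal_mult) auto
    finally show ?thesis using True by simp
  qed simp
  then have "(\<integral>\<^sup>+x. of_bool (\<epsilon> < \<bar>v x\<bar>) \<partial>M) \<le> (\<integral>\<^sup>+x. ennreal (1 / \<epsilon> powr r) * ennreal (\<bar>v x\<bar> powr r) \<partial>M)"
    by (intro nn_integral_mono)
  also have "\<dots> = ennreal (1 / \<epsilon> powr r) * (\<integral>\<^sup>+x. ennreal (\<bar>v x\<bar> powr r) \<partial>M)"
    by (rule nn_integral_cmult) measurable
  finally show ?thesis .
qed

lemma (in prob_space) conv_prob_enn_of_nn_integral_tendsto_0:
  assumes [measurable]: "\<And>n. U n \<in> borel_measurable M"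
    and lim: "(\<lambda>n. \<integral>\<^sup>+\<omega>. U n \<omega> \<partial>M) \<longlonglongrightarrow> 0"
  shows "conv_prob_enn M U"
  unfolding conv_prob_enn_def
proof (intro allI impI)
  fix \<eta> :: real assume \<eta>: "\<eta> > 0"
  define S where "S n = {\<omega>\<in>space M. ennreal \<eta> < U n \<omega>}" for n
  have [measurable]: "S n \<in> sets M" for n unfolding S_def by measurable
  have Markov: "emeasure M (S n) \<le> ennreal (1 / \<eta>) * (\<integral>\<^sup>+\<omega>. U n \<omega> \<partial>M)" for n
  proof -
    have "indicator (S n) \<omega> \<le> ennreal (1 / \<eta>) * U n \<omega>" for \<omega>
    proof (cases "\<omega> \<in> S n")
      case True
      have "ennreal (1 / \<eta>) * ennreal \<eta> = ennreal (1 / \<eta> * \<eta>)"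
        using \<eta> by (intro ennreal_mult[symmetric]) auto
      also have "\<dots> = 1" using \<eta> by simp
      finally have "1 = ennreal (1 / \<eta>) * ennreal \<eta>" ..
      also have "\<dots> \<le> ennreal (1 / \<eta>) * U n \<omega>" using True by (intro mult_left_mono) (auto simp: S_def)
      finally show ?thesis using True by simp
    qed simp
    then have "(\<integral>\<^sup>+\<omega>. indicator (S n) \<omega> \<partial>M) \<le> (\<integral>\<^sup>+\<omega>. ennreal (1 / \<eta>) * U n \<omega> \<partial>M)"
      by (intro nn_integral_mono)
    also have "\<dots> = ennreal (1 / \<eta>) * (\<integral>\<^sup>+\<omega>. U n \<omega> \<partial>M)" by (rule nn_integral_cmult) measurable
    finally show ?thesis by simp
  qed
  have "(\<lambda>n. ennreal (1 / \<eta>) * (\<integral>\<^sup>+\<omega>. U n \<omega> \<partial>M)) \<longlonglongrightarrow> ennreal (1 / \<eta>) * 0"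
    by (intro ennreal_tendsto_cmult lim) simp
  then have bound_lim: "(\<lambda>n. ennreal (1 / \<eta>) * (\<integral>\<^sup>+\<omega>. U n \<omega> \<partial>M)) \<longlonglongrightarrow> 0" by simp
  have "(\<lambda>n. emeasure M (S n)) \<longlonglongrightarrow> 0"
  proof (rule tendsto_sandwich[OF _ _ tendsto_const bound_lim])
    show "\<forall>\<^sub>F n in sequentially. emeasure M (S n) \<le> ennreal (1 / \<eta>) * (\<integral>\<^sup>+\<omega>. U n \<omega> \<partial>M)"
      using Markov by (intro always_eventually allI)
  qed simp
  then have "(\<lambda>n. ennreal (measure M (S n))) \<longlonglongrightarrow> 0" by (simp only: emeasure_eq_measure)
  then have "(\<lambda>n. measure M (S n)) \<longlonglongrightarrow> 0" by (subst (asm) ennreal_tendsto_0_iff) auto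
  then show "(\<lambda>n. measure M {\<omega>\<in>space M. ennreal \<eta> < U n \<omega>}) \<longlonglongrightarrow> 0"
    unfolding S_def .
qed

lemma (in pair_prob_space) exceed_tendsto_0_of_conv_prob_enn:
  fixes V :: "nat \<Rightarrow> 'a \<Rightarrow> 'b \<Rightarrow> real"
  assumes V[measurable]: "\<And>n. (\<lambda>p. V n (fst p) (snd p)) \<in> borel_measurable (M1 \<Otimes>\<^sub>M M2)"
    and conv: "conv_prob_enn M1 (\<lambda>n \<omega>. \<integral>\<^sup>+x. ennreal (\<bar>V n \<omega> x\<bar> powr r) \<partial>M2)"
    and r: "0 < r" and \<epsilon>: "0 < \<epsilon>"
  shows "(\<lambda>n. \<integral>\<^sup>+\<omega>. \<integral>\<^sup>+x. of_bool (\<epsilon> < \<bar>V n \<omega> x\<bar>) \<partial>M2 \<partial>M1) \<longlonglongrightarrow> 0"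
proof (rule ennreal_tendsto_0I)
  fix \<delta> :: real assume \<delta>: "\<delta> > 0"
  define \<eta> where "\<eta> = \<delta> / 2 * \<epsilon> powr r"
  define S where "S n = {\<omega>\<in>space M1. ennreal \<eta> < (\<integral>\<^sup>+x. ennreal (\<bar>V n \<omega> x\<bar> powr r) \<partial>M2)}" for n
  have S[measurable]: "S n \<in> sets M1" for n unfolding S_def by measurable
  have "(\<lambda>n. measure M1 (S n)) \<longlonglongrightarrow> 0"
    using conv \<delta> \<epsilon> unfolding conv_prob_enn_def S_def \<eta>_def by simp
  then have "eventually (\<lambda>n. measure M1 (S n) < \<delta> / 2) sequentially"
    using \<delta> by (intro order_tendstoD) auto
  then show "eventually (\<lambda>n. (\<integral>\<^sup>+\<omega>. \<integral>\<^sup>+x. of_bool (\<epsilon> < \<bar>V n \<omega> x\<bar>) \<partial>M2 \<partial>M1) \<le> ennreal \<delta>) sequentially"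
  proof eventually_elim
    case (elim n)
    have "(\<integral>\<^sup>+x. of_bool (\<epsilon> < \<bar>V n \<omega> x\<bar>) \<partial>M2) \<le> indicator (S n) \<omega> + ennreal (\<delta> / 2)"
      if \<omega>: "\<omega> \<in> space M1" for \<omega>
    proof (cases "\<omega> \<in> S n")
      case True
      have "(\<integral>\<^sup>+x. of_bool (\<epsilon> < \<bar>V n \<omega> x\<bar>) \<partial>M2) \<le> (\<integral>\<^sup>+x. 1 \<partial>M2)" by (intro nn_integral_mono) auto
      then show ?thesis using True by (simp add: M2.emeasure_space_1 add_increasing2)
    next
      case False
      have "(\<lambda>x. V n \<omega> x) \<in> borel_measurable M2" using measurable_Pair2[OF V \<omega>] by simp
      then have "(\<integral>\<^sup>+x. of_bool (\<epsilon> < \<bar>V n \<omega> x\<bar>) \<partial>M2)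
          \<le> ennreal (1 / \<epsilon> powr r) * (\<integral>\<^sup>+x. ennreal (\<bar>V n \<omega> x\<bar> powr r) \<partial>M2)"
        using \<epsilon> r by (rule nn_integral_exceed_le_powr)
      also have "\<dots> \<le> ennreal (1 / \<epsilon> powr r) * ennreal \<eta>"
        using False \<omega> unfolding S_def by (intro mult_left_mono) auto
      also have "\<dots> = ennreal (\<delta> / 2)" using \<epsilon> \<delta> by (simp add: \<eta>_def flip: ennreal_mult)
      finally show ?thesis by (simp add: add_increasing)
    qed
    then have "(\<integral>\<^sup>+\<omega>. \<integral>\<^sup>+x. of_bool (\<epsilon> < \<bar>V n \<omega> x\<bar>) \<partial>M2 \<partial>M1) \<le> (\<integral>\<^sup>+\<omega>. indicator (S n) \<omega> + ennreal (\<delta> / 2) \<partial>M1)"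
      by (intro nn_integral_mono) auto
    also have "\<dots> = ennreal (measure M1 (S n) + \<delta> / 2)"
      using \<delta> by (simp add: nn_integral_add M1.emeasure_space_1 M1.emeasure_eq_measure M1.prob_space ennreal_plus)
    also have "\<dots> \<le> ennreal \<delta>" using elim by (intro ennreal_leI) simp
    finally show ?case .
  qed
qed

lemma (in prob_space) nn_integral_powr_le_truncation:
  fixes d K r :: real and N :: nat
  assumes [measurable]: "v \<in> borel_measurable M" and "0 < d" "d \<le> K" "0 < r" "r < N"
  shows "(\<integral>\<^sup>+x. ennreal (\<bar>v x\<bar> powr r) \<partial>M) \<le> ennreal (d powr r)
           + ennreal (K powr r) * (\<integral>\<^sup>+x. of_bool (d < \<bar>v x\<bar>) \<partial>M)
           + ennreal (1 / K powr (N - r)) * (\<integral>\<^sup>+x. ennreal (\<bar>v x\<bar> ^ N) \<partial>M)"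
proof -
  have "ennreal (\<bar>v x\<bar> powr r) \<le> ennreal (d powr r) + ennreal (K powr r) * of_bool (d < \<bar>v x\<bar>)
          + ennreal (1 / K powr (N - r)) * ennreal (\<bar>v x\<bar> ^ N)" for x
  proof -
    have "ennreal (\<bar>v x\<bar> powr r)
        \<le> ennreal (d powr r + K powr r * of_bool (d < \<bar>v x\<bar>) + 1 / K powr (N - r) * \<bar>v x\<bar> ^ N)"
      using abs_powr_le_truncation[OF assms(2-), of "v x"] by (intro ennreal_leI) simp
    moreover have "ennreal (1 / K powr (N - r)) * ennreal (\<bar>v x\<bar> ^ N) = ennreal (\<bar>v x\<bar> ^ N / K powr (N - r))"
      by (subst ennreal_mult[symmetric]) auto
    ultimately show ?thesis by (cases "d < \<bar>v x\<bar>") (simp_all add: ennreal_plus ennreal_mult)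
  qed
  then have "(\<integral>\<^sup>+x. ennreal (\<bar>v x\<bar> powr r) \<partial>M) \<le> (\<integral>\<^sup>+x. ennreal (d powr r)
          + ennreal (K powr r) * of_bool (d < \<bar>v x\<bar>) + ennreal (1 / K powr (N - r)) * ennreal (\<bar>v x\<bar> ^ N) \<partial>M)"
    by (rule nn_integral_mono)
  also have "\<dots> = ennreal (d powr r) + ennreal (K powr r) * (\<integral>\<^sup>+x. of_bool (d < \<bar>v x\<bar>) \<partial>M)
           + ennreal (1 / K powr (N - r)) * (\<integral>\<^sup>+x. ennreal (\<bar>v x\<bar> ^ N) \<partial>M)"
    by (simp add: nn_integral_add nn_integral_cmult emeasure_space_1)
  finally show ?thesis .
qed

lemma (in prob_space) nn_integral_powr_tendsto_0:
  fixes V :: "nat \<Rightarrow> 'a \<Rightarrow> real" and B r :: real and N :: nat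
  assumes [measurable]: "\<And>n. V n \<in> borel_measurable M"
    and exceed: "\<And>\<epsilon>. 0 < \<epsilon> \<Longrightarrow> (\<lambda>n. \<integral>\<^sup>+x. of_bool (\<epsilon> < \<bar>V n x\<bar>) \<partial>M) \<longlonglongrightarrow> 0"
    and moment: "\<forall>\<^sub>F n in sequentially. (\<integral>\<^sup>+x. ennreal (\<bar>V n x\<bar> ^ N) \<partial>M) \<le> ennreal B"
    and B: "0 \<le> B" and r: "0 < r" "r < N"
  shows "(\<lambda>n. \<integral>\<^sup>+x. ennreal (\<bar>V n x\<bar> powr r) \<partial>M) \<longlonglongrightarrow> 0"
proof (rule ennreal_tendsto_0I)
  fix t :: real assume t: "t > 0"
  define d where "d = (t / 3) powr (1 / r)"
  \<comment> \<open>K is large enough for the tail term B / K^(N - r) to be at most t / 3.\<close>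
  define K where "K = max d ((3 * B / t + 1) powr (1 / (N - r)))"
  have d: "0 < d" "d powr r = t / 3" using t r by (simp_all add: d_def powr_powr)
  have K: "d \<le> K" "0 < K powr (N - r)" using d by (auto simp: K_def)
  have "3 * B / t + 1 = ((3 * B / t + 1) powr (1 / (N - r))) powr (N - r)"
    using t r B by (simp add: powr_powr)
  also have "\<dots> \<le> K powr (N - r)" using r by (intro powr_mono2) (auto simp: K_def)
  finally have "1 / K powr (N - r) * B \<le> t / 3" using K t B by (simp add: field_simps)
  then have tail: "ennreal (1 / K powr (N - r)) * ennreal B \<le> ennreal (t / 3)"
    using B by (subst ennreal_mult[symmetric]) (auto intro: ennreal_leI)
  have "(\<lambda>n. ennreal (K powr r) * (\<integral>\<^sup>+x. of_bool (d < \<bar>V n x\<bar>) \<partial>M)) \<longlonglongrightarrow> ennreal (K powr r) * 0"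
    by (intro ennreal_tendsto_cmult exceed d) simp
  then have "\<forall>\<^sub>F n in sequentially. ennreal (K powr r) * (\<integral>\<^sup>+x. of_bool (d < \<bar>V n x\<bar>) \<partial>M) < ennreal (t / 3)"
    using t by (intro order_tendstoD) auto
  then show "\<forall>\<^sub>F n in sequentially. (\<integral>\<^sup>+x. ennreal (\<bar>V n x\<bar> powr r) \<partial>M) \<le> ennreal t"
    using moment
  proof eventually_elim
    case (elim n)
    have "(\<integral>\<^sup>+x. ennreal (\<bar>V n x\<bar> powr r) \<partial>M) \<le> ennreal (d powr r)
        + ennreal (K powr r) * (\<integral>\<^sup>+x. of_bool (d < \<bar>V n x\<bar>) \<partial>M)
        + ennreal (1 / K powr (N - r)) * (\<integral>\<^sup>+x. ennreal (\<bar>V n x\<bar> ^ N) \<partial>M)"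
      using d K r by (intro nn_integral_powr_le_truncation) auto
    also have "\<dots> \<le> ennreal (t / 3) + ennreal (t / 3) + ennreal (t / 3)"
    proof -
      have "ennreal (1 / K powr (N - r)) * (\<integral>\<^sup>+x. ennreal (\<bar>V n x\<bar> ^ N) \<partial>M)
          \<le> ennreal (1 / K powr (N - r)) * ennreal B"
        using elim(2) by (rule mult_left_mono) simp
      then show ?thesis using elim(1) d(2) tail by (intro add_mono) auto
    qed
    also have "\<dots> = ennreal t" using t by (simp flip: ennreal_plus)
    finally show ?case .
  qed
qed

lemma (in prob_space) nn_integral_min_power_le:
  fixes Y X :: "'a \<Rightarrow> real"
  assumes moment: "(\<integral>\<^sup>+x. ennreal (\<bar>Y x\<bar> ^ N) \<partial>M) \<le> ennreal C" and C: "0 \<le> C"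
    and [measurable]: "Y \<in> borel_measurable M" "X \<in> borel_measurable M"
  shows "(\<integral>\<^sup>+x. ennreal (min \<bar>X x\<bar> (real K) ^ N) \<partial>M)
    \<le> ennreal (2 ^ N * (C + 1)) + ennreal (real K ^ N) * (\<integral>\<^sup>+x. of_bool (1 < \<bar>Y x - X x\<bar>) \<partial>M)"
proof -
  have "(\<integral>\<^sup>+x. ennreal (min \<bar>X x\<bar> (real K) ^ N) \<partial>M) \<le> (\<integral>\<^sup>+x. ennreal (2 ^ N) * ennreal (\<bar>Y x\<bar> ^ N)
      + ennreal (2 ^ N) + ennreal (real K ^ N) * of_bool (1 < \<bar>Y x - X x\<bar>) \<partial>M)"
  proof (rule nn_integral_mono)
    fix x
    have "ennreal (min \<bar>X x\<bar> (real K) ^ N)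
        \<le> ennreal (2 ^ N * \<bar>Y x\<bar> ^ N + 2 ^ N + real K ^ N * of_bool (1 < \<bar>Y x - X x\<bar>))"
      by (intro ennreal_leI min_abs_power_le) simp
    then show "ennreal (min \<bar>X x\<bar> (real K) ^ N) \<le> ennreal (2 ^ N) * ennreal (\<bar>Y x\<bar> ^ N)
        + ennreal (2 ^ N) + ennreal (real K ^ N) * of_bool (1 < \<bar>Y x - X x\<bar>)"
      by (cases "1 < \<bar>Y x - X x\<bar>") (simp_all add: ennreal_plus ennreal_mult)
  qed
  also have "\<dots> = ennreal (2 ^ N) * (\<integral>\<^sup>+x. ennreal (\<bar>Y x\<bar> ^ N) \<partial>M) + ennreal (2 ^ N)
      + ennreal (real K ^ N) * (\<integral>\<^sup>+x. of_bool (1 < \<bar>Y x - X x\<bar>) \<partial>M)"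
    by (simp add: nn_integral_add nn_integral_cmult emeasure_space_1)
  also have "\<dots> \<le> ennreal (2 ^ N) * ennreal C + ennreal (2 ^ N)
      + ennreal (real K ^ N) * (\<integral>\<^sup>+x. of_bool (1 < \<bar>Y x - X x\<bar>) \<partial>M)"
    using moment by (intro add_mono mult_left_mono) auto
  also have "ennreal (2 ^ N) * ennreal C + ennreal (2 ^ N) = ennreal (2 ^ N * (C + 1))"
    using C by (simp add: distrib_left ennreal_plus ennreal_mult)
  finally show ?thesis .
qed

lemma (in prob_space) nn_integral_power_le_of_tendsto_in_measure:
  fixes Y :: "nat \<Rightarrow> 'a \<Rightarrow> real" and X :: "'a \<Rightarrow> real"
  assumes [measurable]: "\<And>n. Y n \<in> borel_measurable M" "X \<in> borel_measurable M"
    and conv: "(\<lambda>n. \<integral>\<^sup>+x. of_bool (1 < \<bar>Y n x - X x\<bar>) \<partial>M) \<longlonglongrightarrow> 0"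
    and moment: "\<forall>\<^sub>F n in sequentially. (\<integral>\<^sup>+x. ennreal (\<bar>Y n x\<bar> ^ N) \<partial>M) \<le> ennreal C"
    and C: "0 \<le> C"
  shows "(\<integral>\<^sup>+x. ennreal (\<bar>X x\<bar> ^ N) \<partial>M) \<le> ennreal (2 ^ N * (C + 1))"
proof -
  have truncated: "(\<integral>\<^sup>+x. ennreal (min \<bar>X x\<bar> (real K) ^ N) \<partial>M) \<le> ennreal (2 ^ N * (C + 1))"
    for K :: nat
  proof (rule tendsto_le[OF sequentially_bot _ tendsto_const])
    have "(\<lambda>n. ennreal (2 ^ N * (C + 1)) + ennreal (real K ^ N) * (\<integral>\<^sup>+x. of_bool (1 < \<bar>Y n x - X x\<bar>) \<partial>M))
        \<longlonglongrightarrow> ennreal (2 ^ N * (C + 1)) + ennreal (real K ^ N) * 0"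
      by (intro tendsto_add tendsto_const ennreal_tendsto_cmult conv) simp
    then show "(\<lambda>n. ennreal (2 ^ N * (C + 1)) + ennreal (real K ^ N) * (\<integral>\<^sup>+x. of_bool (1 < \<bar>Y n x - X x\<bar>) \<partial>M))
        \<longlonglongrightarrow> ennreal (2 ^ N * (C + 1))" by simp
    show "\<forall>\<^sub>F n in sequentially. (\<integral>\<^sup>+x. ennreal (min \<bar>X x\<bar> (real K) ^ N) \<partial>M)
        \<le> ennreal (2 ^ N * (C + 1)) + ennreal (real K ^ N) * (\<integral>\<^sup>+x. of_bool (1 < \<bar>Y n x - X x\<bar>) \<partial>M)"
      using moment by eventually_elim (rule nn_integral_min_power_le[OF _ C]; measurable)
  qed
  have "(\<integral>\<^sup>+x. ennreal (\<bar>X x\<bar> ^ N) \<partial>M) = (\<integral>\<^sup>+x. (SUP K::nat. ennreal (min \<bar>X x\<bar> (real K) ^ N)) \<partial>M)"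
    by (simp add: SUP_min_power)
  also have "\<dots> = (SUP K::nat. \<integral>\<^sup>+x. ennreal (min \<bar>X x\<bar> (real K) ^ N) \<partial>M)"
    by (rule nn_integral_monotone_convergence_SUP)
       (auto simp: incseq_def le_fun_def intro!: ennreal_leI power_mono)
  also have "\<dots> \<le> ennreal (2 ^ N * (C + 1))" by (intro SUP_least truncated)
  finally show ?thesis .
qed

lemma nn_integral_abs_diff_power_le:
  assumes [measurable]: "u \<in> borel_measurable M" "v \<in> borel_measurable M"
  shows "(\<integral>\<^sup>+x. ennreal (\<bar>u x - v x\<bar> ^ N) \<partial>M)
    \<le> ennreal (2 ^ N) * ((\<integral>\<^sup>+x. ennreal (\<bar>u x\<bar> ^ N) \<partial>M) + (\<integral>\<^sup>+x. ennreal (\<bar>v x\<bar> ^ N) \<partial>M))"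
proof -
  have "ennreal (\<bar>u x - v x\<bar> ^ N) \<le> ennreal (2 ^ N) * (ennreal (\<bar>u x\<bar> ^ N) + ennreal (\<bar>v x\<bar> ^ N))" for x
  proof -
    have "ennreal (\<bar>u x - v x\<bar> ^ N) \<le> ennreal (2 ^ N * (\<bar>u x\<bar> ^ N + \<bar>v x\<bar> ^ N))"
      using abs_add_power_le[of "u x" "- v x" N] by (intro ennreal_leI) simp
    also have "\<dots> = ennreal (2 ^ N) * (ennreal (\<bar>u x\<bar> ^ N) + ennreal (\<bar>v x\<bar> ^ N))"
      by (simp add: ennreal_mult)
    finally show ?thesis .
  qed
  then have "(\<integral>\<^sup>+x. ennreal (\<bar>u x - v x\<bar> ^ N) \<partial>M)
      \<le> (\<integral>\<^sup>+x. ennreal (2 ^ N) * (ennreal (\<bar>u x\<bar> ^ N) + ennreal (\<bar>v x\<bar> ^ N)) \<partial>M)"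
    by (rule nn_integral_mono)
  also have "\<dots> = ennreal (2 ^ N) * ((\<integral>\<^sup>+x. ennreal (\<bar>u x\<bar> ^ N) \<partial>M) + (\<integral>\<^sup>+x. ennreal (\<bar>v x\<bar> ^ N) \<partial>M))"
    by (simp add: nn_integral_cmult nn_integral_add)
  finally show ?thesis .
qed

lemma conv_prob_enn_eventually_cong:
  assumes "\<forall>\<^sub>F n in sequentially. \<forall>\<omega>\<in>space M. Y n \<omega> = Y' n \<omega>"
  shows "conv_prob_enn M Y \<longleftrightarrow> conv_prob_enn M Y'"
proof -
  have "(\<lambda>n. measure M {\<omega>\<in>space M. ennreal \<epsilon> < Y n \<omega>}) \<longlonglongrightarrow> 0
    \<longleftrightarrow> (\<lambda>n. measure M {\<omega>\<in>space M. ennreal \<epsilon> < Y' n \<omega>}) \<longlonglongrightarrow> 0" for \<epsilon>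
  proof (rule tendsto_cong)
    show "\<forall>\<^sub>F n in sequentially. measure M {\<omega>\<in>space M. ennreal \<epsilon> < Y n \<omega>}
        = measure M {\<omega>\<in>space M. ennreal \<epsilon> < Y' n \<omega>}"
      using assms
    proof eventually_elim
      case (elim n)
      then have "{\<omega>\<in>space M. ennreal \<epsilon> < Y n \<omega>} = {\<omega>\<in>space M. ennreal \<epsilon> < Y' n \<omega>}" by auto
      then show ?case by simp
    qed
  qed
  then show ?thesis unfolding conv_prob_enn_def by simp
qed

subsection \<open>Step-function approximation on a product space\<close>

definition uniformly_Lp_bounded :: "'a measure \<Rightarrow> (nat \<Rightarrow> 'g set) \<Rightarrow> (nat \<Rightarrow> 'g \<Rightarrow> 'a \<Rightarrow> real) \<Rightarrow> bool"
  where "uniformly_Lp_bounded M G c \<longleftrightarrow> (\<forall>n. \<forall>g\<in>G n. c n g \<in> borel_measurable M) \<and>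
    (\<forall>p::nat. \<exists>C. \<forall>n. \<forall>g\<in>G n. (\<integral>\<^sup>+\<omega>. ennreal (\<bar>c n g \<omega>\<bar> ^ p) \<partial>M) \<le> ennreal C)"

lemma uniformly_Lp_bounded_reindex:
  assumes "uniformly_Lp_bounded M G c" "\<And>n g. g \<in> H n \<Longrightarrow> h n g \<in> G n"
  shows "uniformly_Lp_bounded M H (\<lambda>n g. c n (h n g))"
  using assms unfolding uniformly_Lp_bounded_def by meson

lemma uniformly_Lp_boundedD:
  assumes "uniformly_Lp_bounded M G c"
  shows "\<exists>C\<ge>0. \<forall>n. \<forall>g\<in>G n. (\<integral>\<^sup>+\<omega>. ennreal (\<bar>c n g \<omega>\<bar> ^ p) \<partial>M) \<le> ennreal C"
proof -
  obtain C where C: "\<forall>n. \<forall>g\<in>G n. (\<integral>\<^sup>+\<omega>. ennreal (\<bar>c n g \<omega>\<bar> ^ p) \<partial>M) \<le> ennreal C"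
    using assms unfolding uniformly_Lp_bounded_def by blast
  show ?thesis
  proof (intro exI conjI allI ballI)
    fix n g assume "g \<in> G n"
    then have "(\<integral>\<^sup>+\<omega>. ennreal (\<bar>c n g \<omega>\<bar> ^ p) \<partial>M) \<le> ennreal C" using C by blast
    also have "\<dots> \<le> ennreal (max C 0)" by (rule ennreal_leI) simp
    finally show "(\<integral>\<^sup>+\<omega>. ennreal (\<bar>c n g \<omega>\<bar> ^ p) \<partial>M) \<le> ennreal (max C 0)" .
  qed simp
qed

lemma (in prob_space) uniformly_Lp_boundedI:
  assumes meas: "\<And>n g. g \<in> G n \<Longrightarrow> c n g \<in> borel_measurable M"
    and bound: "\<And>p::nat. 2 \<le> p \<Longrightarrow> \<exists>C. \<forall>n. \<forall>g\<in>G n. (\<integral>\<^sup>+\<omega>. ennreal (\<bar>c n g \<omega>\<bar> ^ p) \<partial>M) \<le> ennreal C"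
  shows "uniformly_Lp_bounded M G c"
  unfolding uniformly_Lp_bounded_def
proof (intro conjI allI ballI meas)
  fix p :: nat
  obtain C where C: "\<forall>n. \<forall>g\<in>G n. (\<integral>\<^sup>+\<omega>. ennreal (\<bar>c n g \<omega>\<bar> ^ max p 2) \<partial>M) \<le> ennreal C"
    using bound[of "max p 2"] by auto
  have "(\<integral>\<^sup>+\<omega>. ennreal (\<bar>c n g \<omega>\<bar> ^ p) \<partial>M) \<le> ennreal (1 + max C 0)" if g: "g \<in> G n" for n g
  proof -
    note meas[OF g, measurable]
    have "(\<integral>\<^sup>+\<omega>. ennreal (\<bar>c n g \<omega>\<bar> ^ p) \<partial>M) \<le> (\<integral>\<^sup>+\<omega>. 1 + ennreal (\<bar>c n g \<omega>\<bar> ^ max p 2) \<partial>M)"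
    proof (intro nn_integral_mono)
      fix \<omega>
      have "ennreal (\<bar>c n g \<omega>\<bar> ^ p) \<le> ennreal (1 + \<bar>c n g \<omega>\<bar> ^ max p 2)"
        by (intro ennreal_leI abs_power_le_one_plus) simp
      then show "ennreal (\<bar>c n g \<omega>\<bar> ^ p) \<le> 1 + ennreal (\<bar>c n g \<omega>\<bar> ^ max p 2)" by simp
    qed
    also have "\<dots> = 1 + (\<integral>\<^sup>+\<omega>. ennreal (\<bar>c n g \<omega>\<bar> ^ max p 2) \<partial>M)"
      by (simp add: nn_integral_add emeasure_space_1)
    also have "\<dots> \<le> 1 + ennreal (max C 0)"
      using C g order.trans[OF _ ennreal_leI[of C "max C 0"]] by (intro add_left_mono) auto
    finally show ?thesis by simp
  qed
  then show "\<exists>C. \<forall>n. \<forall>g\<in>G n. (\<integral>\<^sup>+\<omega>. ennreal (\<bar>c n g \<omega>\<bar> ^ p) \<partial>M) \<le> ennreal C" by blast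
qed

text \<open>The common abstraction of the conditions in [A] and [A']_r on [0,1] and on [0,1]^2.\<close>
locale step_approximation = pair_prob_space M \<nu> for M :: "'a measure" and \<nu> :: "'t measure" +
  fixes cells :: "nat \<Rightarrow> 'g set" and cell :: "nat \<Rightarrow> 'g \<Rightarrow> 't set"
    and c :: "nat \<Rightarrow> 'g \<Rightarrow> 'a \<Rightarrow> real" and f :: "'t \<Rightarrow> 'a \<Rightarrow> real"
  assumes finite_cells: "finite (cells n)"
    and sets_cell[measurable]: "cell n g \<in> sets \<nu>"
    and partition: "1 \<le> n \<Longrightarrow> AE x in \<nu>. (\<Sum>g\<in>cells n. indicator (cell n g) x) = (1::real)"
    and measurable_c: "g \<in> cells n \<Longrightarrow> c n g \<in> borel_measurable M"
    and measurable_f[measurable]: "(\<lambda>p. f (snd p) (fst p)) \<in> borel_measurable (M \<Otimes>\<^sub>M \<nu>)"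
begin

definition step :: "nat \<Rightarrow> 't \<Rightarrow> 'a \<Rightarrow> real"
  where "step n x \<omega> = (\<Sum>g\<in>cells n. indicator (cell n g) x * c n g \<omega>)"

lemma measurable_step[measurable]: "(\<lambda>p. step n (snd p) (fst p)) \<in> borel_measurable (M \<Otimes>\<^sub>M \<nu>)"
  unfolding step_def
  by (intro borel_measurable_sum borel_measurable_times measurable_compose[OF measurable_fst measurable_c]
      measurable_compose[OF measurable_snd borel_measurable_indicator] sets_cell)

lemma measurable_section_f: "\<omega> \<in> space M \<Longrightarrow> (\<lambda>x. f x \<omega>) \<in> borel_measurable \<nu>"
  using measurable_Pair2[OF measurable_f] by simp

lemma AE_unique_cell:
  assumes "1 \<le> n"
  shows "AE x in \<nu>. \<exists>g\<in>cells n. x \<in> cell n g \<and> (\<forall>g'\<in>cells n. x \<in> cell n g' \<longrightarrow> g' = g)"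
  using partition[OF assms]
proof eventually_elim
  case (elim x)
  define S where "S = {g\<in>cells n. x \<in> cell n g}"
  have "(\<Sum>g\<in>cells n. indicator (cell n g) x) = (\<Sum>g\<in>cells n. of_bool (x \<in> cell n g) :: real)"
    by (simp add: indicator_def)
  also have "\<dots> = real (card S)"
    using finite_cells by (simp add: sum_of_bool_eq S_def Int_def)
  finally have "card S = 1" using elim by simp
  then obtain g where "S = {g}" by (rule card_1_singletonE)
  then show ?case unfolding S_def by blast
qed

lemma sum_cells_indicator_eq:
  fixes h :: "'g \<Rightarrow> 'b::semiring_1"
  assumes "g \<in> cells n" "x \<in> cell n g" "\<forall>g'\<in>cells n. x \<in> cell n g' \<longrightarrow> g' = g"
  shows "(\<Sum>g'\<in>cells n. indicator (cell n g') x * h g') = h g"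
proof -
  have outside: "indicator (cell n g') x = (0::'b)" if "g' \<in> cells n" "g' \<noteq> g" for g'
    using assms(3) that by (auto simp: indicator_def)
  have "(\<Sum>g'\<in>cells n - {g}. indicator (cell n g') x * h g') = 0"
    by (intro sum.neutral ballI) (simp add: outside)
  moreover have "(\<Sum>g'\<in>cells n. indicator (cell n g') x * h g')
      = indicator (cell n g) x * h g + (\<Sum>g'\<in>cells n - {g}. indicator (cell n g') x * h g')"
    by (rule sum.remove[OF finite_cells assms(1)])
  ultimately show ?thesis using assms(2) by simp
qed

lemma sum_emeasure_cells: "1 \<le> n \<Longrightarrow> (\<Sum>g\<in>cells n. emeasure \<nu> (cell n g)) = 1"
proof -
  assume n: "1 \<le> n"
  have "(\<Sum>g\<in>cells n. emeasure \<nu> (cell n g)) = (\<integral>\<^sup>+x. (\<Sum>g\<in>cells n. indicator (cell n g) x) \<partial>\<nu>)"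
    by (simp add: nn_integral_sum)
  also have "\<dots> = (\<integral>\<^sup>+x. 1 \<partial>\<nu>)"
  proof (intro nn_integral_cong_AE)
    show "AE x in \<nu>. (\<Sum>g\<in>cells n. indicator (cell n g) x) = (1 :: ennreal)"
      using partition[OF n]
    proof eventually_elim
      case (elim x)
      have "(\<Sum>g\<in>cells n. indicator (cell n g) x :: ennreal) = ennreal (\<Sum>g\<in>cells n. indicator (cell n g) x)"
        by (subst sum_ennreal[symmetric]) (auto simp: ennreal_indicator)
      then show ?case using elim by simp
    qed
  qed
  finally show ?thesis by (simp add: M2.emeasure_space_1)
qed

lemma cellwise_error_eq:
  assumes "1 \<le> n" "\<omega> \<in> space M"
  shows "(\<Sum>g\<in>cells n. \<integral>\<^sup>+x. ennreal (indicator (cell n g) x * \<bar>c n g \<omega> - f x \<omega>\<bar> powr r) \<partial>\<nu>)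
    = (\<integral>\<^sup>+x. ennreal (\<bar>step n x \<omega> - f x \<omega>\<bar> powr r) \<partial>\<nu>)"
proof -
  note [measurable] = measurable_section_f[OF assms(2)]
  have "(\<Sum>g\<in>cells n. \<integral>\<^sup>+x. ennreal (indicator (cell n g) x * \<bar>c n g \<omega> - f x \<omega>\<bar> powr r) \<partial>\<nu>)
      = (\<integral>\<^sup>+x. (\<Sum>g\<in>cells n. ennreal (indicator (cell n g) x * \<bar>c n g \<omega> - f x \<omega>\<bar> powr r)) \<partial>\<nu>)"
    by (rule nn_integral_sum[symmetric]) measurable
  also have "\<dots> = (\<integral>\<^sup>+x. ennreal (\<Sum>g\<in>cells n. indicator (cell n g) x * \<bar>c n g \<omega> - f x \<omega>\<bar> powr r) \<partial>\<nu>)"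
    by (intro nn_integral_cong sum_ennreal) auto
  also have "\<dots> = (\<integral>\<^sup>+x. ennreal (\<bar>step n x \<omega> - f x \<omega>\<bar> powr r) \<partial>\<nu>)"
  proof (intro nn_integral_cong_AE)
    show "AE x in \<nu>. ennreal (\<Sum>g\<in>cells n. indicator (cell n g) x * \<bar>c n g \<omega> - f x \<omega>\<bar> powr r)
        = ennreal (\<bar>step n x \<omega> - f x \<omega>\<bar> powr r)"
      using AE_unique_cell[OF assms(1)]
    proof eventually_elim
      case (elim x)
      then obtain g where g: "g \<in> cells n" "x \<in> cell n g" "\<forall>g'\<in>cells n. x \<in> cell n g' \<longrightarrow> g' = g"
        by blast
      show ?case unfolding step_def sum_cells_indicator_eq[OF g] ..
    qed
  qed
  finally show ?thesis .
qed

lemma nn_integral_pair_eq: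
  fixes F :: "'t \<Rightarrow> 'a \<Rightarrow> ennreal"
  assumes "(\<lambda>p. F (snd p) (fst p)) \<in> borel_measurable (M \<Otimes>\<^sub>M \<nu>)"
  shows "(\<integral>\<^sup>+\<omega>. \<integral>\<^sup>+x. F x \<omega> \<partial>\<nu> \<partial>M) = (\<integral>\<^sup>+p. F (snd p) (fst p) \<partial>(M \<Otimes>\<^sub>M \<nu>))"
  using M2.nn_integral_fst[OF assms] by simp

lemma conv_prob_cellwise_iff:
  "conv_prob_enn M (\<lambda>n \<omega>. \<Sum>g\<in>cells n. \<integral>\<^sup>+x. ennreal (indicator (cell n g) x * \<bar>c n g \<omega> - f x \<omega>\<bar> powr r) \<partial>\<nu>)
    \<longleftrightarrow> conv_prob_enn M (\<lambda>n \<omega>. \<integral>\<^sup>+x. ennreal (\<bar>step n x \<omega> - f x \<omega>\<bar> powr r) \<partial>\<nu>)"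
proof (rule conv_prob_enn_eventually_cong)
  show "\<forall>\<^sub>F n in sequentially. \<forall>\<omega>\<in>space M.
      (\<Sum>g\<in>cells n. \<integral>\<^sup>+x. ennreal (indicator (cell n g) x * \<bar>c n g \<omega> - f x \<omega>\<bar> powr r) \<partial>\<nu>)
      = (\<integral>\<^sup>+x. ennreal (\<bar>step n x \<omega> - f x \<omega>\<bar> powr r) \<partial>\<nu>)"
    using eventually_ge_at_top[of 1] by eventually_elim (simp add: cellwise_error_eq)
qed

lemma nn_integral_step_section:
  assumes "1 \<le> n"
  shows "(\<integral>\<^sup>+x. ennreal (\<bar>step n x \<omega>\<bar> ^ N) \<partial>\<nu>) = (\<Sum>g\<in>cells n. emeasure \<nu> (cell n g) * ennreal (\<bar>c n g \<omega>\<bar> ^ N))"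
proof -
  have "(\<integral>\<^sup>+x. ennreal (\<bar>step n x \<omega>\<bar> ^ N) \<partial>\<nu>)
      = (\<integral>\<^sup>+x. (\<Sum>g\<in>cells n. indicator (cell n g) x * ennreal (\<bar>c n g \<omega>\<bar> ^ N)) \<partial>\<nu>)"
  proof (intro nn_integral_cong_AE)
    show "AE x in \<nu>. ennreal (\<bar>step n x \<omega>\<bar> ^ N) = (\<Sum>g\<in>cells n. indicator (cell n g) x * ennreal (\<bar>c n g \<omega>\<bar> ^ N))"
      using AE_unique_cell[OF assms]
    proof eventually_elim
      case (elim x)
      then obtain g where g: "g \<in> cells n" "x \<in> cell n g" "\<forall>g'\<in>cells n. x \<in> cell n g' \<longrightarrow> g' = g"
        by blast
      show ?case unfolding step_def sum_cells_indicator_eq[OF g] ..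
    qed
  qed
  also have "\<dots> = (\<Sum>g\<in>cells n. \<integral>\<^sup>+x. indicator (cell n g) x * ennreal (\<bar>c n g \<omega>\<bar> ^ N) \<partial>\<nu>)"
    by (rule nn_integral_sum) measurable
  also have "\<dots> = (\<Sum>g\<in>cells n. emeasure \<nu> (cell n g) * ennreal (\<bar>c n g \<omega>\<bar> ^ N))"
    by (intro sum.cong refl) (simp add: nn_integral_multc)
  finally show ?thesis .
qed

lemma nn_integral_step_power_le:
  assumes n: "1 \<le> n" and C: "\<And>g. g \<in> cells n \<Longrightarrow> (\<integral>\<^sup>+\<omega>. ennreal (\<bar>c n g \<omega>\<bar> ^ N) \<partial>M) \<le> ennreal C"
  shows "(\<integral>\<^sup>+p. ennreal (\<bar>step n (snd p) (fst p)\<bar> ^ N) \<partial>(M \<Otimes>\<^sub>M \<nu>)) \<le> ennreal C"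
proof -
  have "(\<integral>\<^sup>+p. ennreal (\<bar>step n (snd p) (fst p)\<bar> ^ N) \<partial>(M \<Otimes>\<^sub>M \<nu>))
      = (\<integral>\<^sup>+\<omega>. \<integral>\<^sup>+x. ennreal (\<bar>step n x \<omega>\<bar> ^ N) \<partial>\<nu> \<partial>M)"
    by (rule nn_integral_pair_eq[symmetric]) measurable
  also have "\<dots> = (\<integral>\<^sup>+\<omega>. (\<Sum>g\<in>cells n. emeasure \<nu> (cell n g) * ennreal (\<bar>c n g \<omega>\<bar> ^ N)) \<partial>M)"
    by (simp add: nn_integral_step_section[OF n])
  also have "\<dots> = (\<Sum>g\<in>cells n. emeasure \<nu> (cell n g) * (\<integral>\<^sup>+\<omega>. ennreal (\<bar>c n g \<omega>\<bar> ^ N) \<partial>M))"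
  proof -
    have [measurable]: "(\<lambda>\<omega>. ennreal (\<bar>c n g \<omega>\<bar> ^ N)) \<in> borel_measurable M" if "g \<in> cells n" for g
      using measurable_c[OF that] by measurable
    then show ?thesis by (simp add: nn_integral_sum nn_integral_cmult)
  qed
  also have "\<dots> \<le> (\<Sum>g\<in>cells n. emeasure \<nu> (cell n g) * ennreal C)"
    by (intro sum_mono mult_left_mono C) auto
  also have "\<dots> = ennreal C" by (simp add: sum_distrib_right[symmetric] sum_emeasure_cells[OF n])
  finally show ?thesis .
qed

lemma step_error_moments_bounded:
  assumes bounded: "uniformly_Lp_bounded M cells c"
    and conv: "(\<lambda>n. \<integral>\<^sup>+\<omega>. \<integral>\<^sup>+x. of_bool (1 < \<bar>step n x \<omega> - f x \<omega>\<bar>) \<partial>\<nu> \<partial>M) \<longlonglongrightarrow> 0"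
  shows "\<exists>B\<ge>0. \<forall>\<^sub>F n in sequentially.
    (\<integral>\<^sup>+p. ennreal (\<bar>step n (snd p) (fst p) - f (snd p) (fst p)\<bar> ^ N) \<partial>(M \<Otimes>\<^sub>M \<nu>)) \<le> ennreal B"
proof -
  obtain C where "0 \<le> C" and C: "\<forall>n. \<forall>g\<in>cells n. (\<integral>\<^sup>+\<omega>. ennreal (\<bar>c n g \<omega>\<bar> ^ N) \<partial>M) \<le> ennreal C"
    using uniformly_Lp_boundedD[OF bounded] by blast
  have step_moment: "\<forall>\<^sub>F n in sequentially.
      (\<integral>\<^sup>+p. ennreal (\<bar>step n (snd p) (fst p)\<bar> ^ N) \<partial>(M \<Otimes>\<^sub>M \<nu>)) \<le> ennreal C"
    using eventually_ge_at_top[of 1] by eventually_elim (use C in \<open>blast intro: nn_integral_step_power_le\<close>)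
  have "(\<integral>\<^sup>+\<omega>. \<integral>\<^sup>+x. of_bool (1 < \<bar>step n x \<omega> - f x \<omega>\<bar>) \<partial>\<nu> \<partial>M)
      = (\<integral>\<^sup>+p. of_bool (1 < \<bar>step n (snd p) (fst p) - f (snd p) (fst p)\<bar>) \<partial>(M \<Otimes>\<^sub>M \<nu>))" for n
    by (rule nn_integral_pair_eq) measurable
  with conv have "(\<lambda>n. \<integral>\<^sup>+p. of_bool (1 < \<bar>step n (snd p) (fst p) - f (snd p) (fst p)\<bar>) \<partial>(M \<Otimes>\<^sub>M \<nu>)) \<longlonglongrightarrow> 0"
    by simp
  from P.nn_integral_power_le_of_tendsto_in_measure[OF _ _ this step_moment \<open>0 \<le> C\<close>]
  have f_moment: "(\<integral>\<^sup>+p. ennreal (\<bar>f (snd p) (fst p)\<bar> ^ N) \<partial>(M \<Otimes>\<^sub>M \<nu>)) \<le> ennreal (2 ^ N * (C + 1))"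
    by measurable
  show ?thesis
  proof (intro exI conjI)
    show "\<forall>\<^sub>F n in sequentially. (\<integral>\<^sup>+p. ennreal (\<bar>step n (snd p) (fst p) - f (snd p) (fst p)\<bar> ^ N) \<partial>(M \<Otimes>\<^sub>M \<nu>))
        \<le> ennreal (2 ^ N * (C + 2 ^ N * (C + 1)))"
      using step_moment
    proof eventually_elim
      case (elim n)
      have "(\<integral>\<^sup>+p. ennreal (\<bar>step n (snd p) (fst p) - f (snd p) (fst p)\<bar> ^ N) \<partial>(M \<Otimes>\<^sub>M \<nu>))
          \<le> ennreal (2 ^ N) * ((\<integral>\<^sup>+p. ennreal (\<bar>step n (snd p) (fst p)\<bar> ^ N) \<partial>(M \<Otimes>\<^sub>M \<nu>))
              + (\<integral>\<^sup>+p. ennreal (\<bar>f (snd p) (fst p)\<bar> ^ N) \<partial>(M \<Otimes>\<^sub>M \<nu>)))"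
        by (rule nn_integral_abs_diff_power_le) measurable
      also have "\<dots> \<le> ennreal (2 ^ N) * (ennreal C + ennreal (2 ^ N * (C + 1)))"
        using elim f_moment by (intro mult_left_mono add_mono) auto
      also have "\<dots> = ennreal (2 ^ N * (C + 2 ^ N * (C + 1)))"
        using \<open>0 \<le> C\<close> by (simp add: ennreal_mult ennreal_plus)
      finally show ?case .
    qed
  qed (use \<open>0 \<le> C\<close> in simp)
qed

lemma conv_prob_cellwise_of_conv_in_measure:
  assumes exceed: "\<And>\<epsilon>. 0 < \<epsilon> \<Longrightarrow> (\<lambda>n. \<integral>\<^sup>+\<omega>. \<integral>\<^sup>+x. of_bool (\<epsilon> < \<bar>step n x \<omega> - f x \<omega>\<bar>) \<partial>\<nu> \<partial>M) \<longlonglongrightarrow> 0"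
    and bounded: "uniformly_Lp_bounded M cells c" and r: "0 < r"
  shows "conv_prob_enn M (\<lambda>n \<omega>. \<Sum>g\<in>cells n. \<integral>\<^sup>+x. ennreal (indicator (cell n g) x * \<bar>c n g \<omega> - f x \<omega>\<bar> powr r) \<partial>\<nu>)"
proof -
  define N where "N = nat \<lceil>r\<rceil> + 1"
  have "real N = of_int \<lceil>r\<rceil> + 1" using r by (simp add: N_def)
  then have "r < real N" using le_of_int_ceiling[of r] by linarith
  obtain B where "0 \<le> B" and moment: "\<forall>\<^sub>F n in sequentially.
      (\<integral>\<^sup>+p. ennreal (\<bar>step n (snd p) (fst p) - f (snd p) (fst p)\<bar> ^ N) \<partial>(M \<Otimes>\<^sub>M \<nu>)) \<le> ennreal B"
    using step_error_moments_bounded[OF bounded exceed[of 1]] by auto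
  have pair: "(\<integral>\<^sup>+\<omega>. \<integral>\<^sup>+x. F (step n x \<omega> - f x \<omega>) \<partial>\<nu> \<partial>M)
      = (\<integral>\<^sup>+p. F (step n (snd p) (fst p) - f (snd p) (fst p)) \<partial>(M \<Otimes>\<^sub>M \<nu>))"
    if [measurable]: "F \<in> borel_measurable borel" for F :: "real \<Rightarrow> ennreal" and n
    by (rule nn_integral_pair_eq) measurable
  have "(\<lambda>n. \<integral>\<^sup>+p. ennreal (\<bar>step n (snd p) (fst p) - f (snd p) (fst p)\<bar> powr r) \<partial>(M \<Otimes>\<^sub>M \<nu>)) \<longlonglongrightarrow> 0"
  proof (rule P.nn_integral_powr_tendsto_0[OF _ _ moment \<open>0 \<le> B\<close> r \<open>r < N\<close>])
    fix \<epsilon> :: real assume "0 < \<epsilon>"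
    from exceed[OF this] show "(\<lambda>n. \<integral>\<^sup>+p. of_bool (\<epsilon> < \<bar>step n (snd p) (fst p) - f (snd p) (fst p)\<bar>) \<partial>(M \<Otimes>\<^sub>M \<nu>)) \<longlonglongrightarrow> 0"
      by (simp add: pair[of "\<lambda>v. of_bool (\<epsilon> < \<bar>v\<bar>)"])
  qed measurable
  then have "(\<lambda>n. \<integral>\<^sup>+\<omega>. \<integral>\<^sup>+x. ennreal (\<bar>step n x \<omega> - f x \<omega>\<bar> powr r) \<partial>\<nu> \<partial>M) \<longlonglongrightarrow> 0"
    by (simp add: pair[of "\<lambda>v. ennreal (\<bar>v\<bar> powr r)"])
  then have "conv_prob_enn M (\<lambda>n \<omega>. \<integral>\<^sup>+x. ennreal (\<bar>step n x \<omega> - f x \<omega>\<bar> powr r) \<partial>\<nu>)"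
    by (intro M1.conv_prob_enn_of_nn_integral_tendsto_0) measurable
  then show ?thesis by (simp add: conv_prob_cellwise_iff)
qed

lemma conv_in_measure_of_conv_prob_cellwise:
  assumes "conv_prob_enn M (\<lambda>n \<omega>. \<Sum>g\<in>cells n. \<integral>\<^sup>+x. ennreal (indicator (cell n g) x * \<bar>c n g \<omega> - f x \<omega>\<bar> powr r) \<partial>\<nu>)"
    and "0 < r" "0 < \<epsilon>"
  shows "(\<lambda>n. \<integral>\<^sup>+\<omega>. \<integral>\<^sup>+x. of_bool (\<epsilon> < \<bar>step n x \<omega> - f x \<omega>\<bar>) \<partial>\<nu> \<partial>M) \<longlonglongrightarrow> 0"
proof (rule exceed_tendsto_0_of_conv_prob_enn[where V="\<lambda>n \<omega> x. step n x \<omega> - f x \<omega>", OF _ _ assms(2,3)])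
  show "conv_prob_enn M (\<lambda>n \<omega>. \<integral>\<^sup>+x. ennreal (\<bar>step n x \<omega> - f x \<omega>\<bar> powr r) \<partial>\<nu>)"
    using assms(1) by (simp add: conv_prob_cellwise_iff)
qed measurable

theorem conv_in_measure_iff_conv_prob_cellwise:
  assumes "uniformly_Lp_bounded M cells c" "0 < r"
  shows "(\<forall>\<epsilon>>0. (\<lambda>n. \<integral>\<^sup>+\<omega>. \<integral>\<^sup>+x. of_bool (\<epsilon> < \<bar>step n x \<omega> - f x \<omega>\<bar>) \<partial>\<nu> \<partial>M) \<longlonglongrightarrow> 0)
    \<longleftrightarrow> conv_prob_enn M (\<lambda>n \<omega>. \<Sum>g\<in>cells n. \<integral>\<^sup>+x. ennreal (indicator (cell n g) x * \<bar>c n g \<omega> - f x \<omega>\<bar> powr r) \<partial>\<nu>)"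
  using conv_prob_cellwise_of_conv_in_measure[OF _ assms] conv_in_measure_of_conv_prob_cellwise[OF _ assms(2)]
  by blast

end

abbreviation unit_interval :: "real measure"
  where "unit_interval \<equiv> uniform_measure lborel {0..1}"

lemma prob_space_unit_interval: "prob_space unit_interval"
  by (intro prob_space_uniform_measure) auto

lemma pair_prob_spaceI: "prob_space M \<Longrightarrow> prob_space N \<Longrightarrow> pair_prob_space M N"
  by (simp add: pair_prob_space_def pair_sigma_finite_def prob_space_imp_sigma_finite)

lemma nn_integral_unit_interval:
  "g \<in> borel_measurable borel \<Longrightarrow> (\<integral>\<^sup>+x. g x \<partial>unit_interval) = (\<integral>\<^sup>+x\<in>{0..1}. g x \<partial>lborel)"
  by (simp add: nn_integral_uniform_measure divide_ennreal_def)

lemma sets_pair_unit_interval: "sets (M \<Otimes>\<^sub>M unit_interval) = sets (M \<Otimes>\<^sub>M lborel)"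
  by (intro sets_pair_measure_cong) simp_all

lemma sets_unit_square: "sets (unit_interval \<Otimes>\<^sub>M unit_interval) = sets (lborel \<Otimes>\<^sub>M lborel)"
  by (intro sets_pair_measure_cong) simp_all

lemma nn_integral_unit_square:
  assumes "g \<in> borel_measurable (lborel \<Otimes>\<^sub>M lborel)"
  shows "(\<integral>\<^sup>+x. g x \<partial>(unit_interval \<Otimes>\<^sub>M unit_interval))
    = (\<integral>\<^sup>+t\<in>{0..1}. (\<integral>\<^sup>+s\<in>{0..1}. g (t, s) \<partial>lborel) \<partial>lborel)"
proof -
  interpret U: prob_space unit_interval by (rule prob_space_unit_interval)
  have [measurable]: "g \<in> borel_measurable (unit_interval \<Otimes>\<^sub>M unit_interval)"
    using assms by (simp add: measurable_cong_sets[OF sets_unit_square refl])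
  have "(\<integral>\<^sup>+x. g x \<partial>(unit_interval \<Otimes>\<^sub>M unit_interval)) = (\<integral>\<^sup>+t. \<integral>\<^sup>+s. g (t, s) \<partial>unit_interval \<partial>unit_interval)"
    by (rule U.nn_integral_fst[symmetric]) measurable
  also have "\<dots> = (\<integral>\<^sup>+t. (\<integral>\<^sup>+s\<in>{0..1}. g (t, s) \<partial>lborel) \<partial>unit_interval)"
    using assms by (intro nn_integral_cong nn_integral_unit_interval) measurable
  also have "\<dots> = (\<integral>\<^sup>+t\<in>{0..1}. (\<integral>\<^sup>+s\<in>{0..1}. g (t, s) \<partial>lborel) \<partial>lborel)"
    using assms by (intro nn_integral_unit_interval) measurable
  finally show ?thesis .
qed

lemma sets_Iv[measurable]: "Iv n j \<in> sets borel"
  unfolding Iv_def by simp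

lemma AE_not_grid_point:
  assumes "1 \<le> n"
  shows "AE x in lborel. real n * x \<notin> \<int>"
proof -
  have "x \<in> range (\<lambda>i. real_of_int i / real n)" if "real n * x \<in> \<int>" for x
  proof -
    from that obtain i where "real n * x = real_of_int i" by (rule Ints_cases)
    then have "x = real_of_int i / real n" using assms by (simp add: field_simps)
    then show ?thesis by blast
  qed
  then have "{x. real n * x \<in> \<int>} \<subseteq> range (\<lambda>i. real_of_int i / real n)" by blast
  then have "{x. real n * x \<in> \<int>} \<in> null_sets lborel"
    by (rule countable_imp_null_set_lborel[OF countable_subset]) simp
  from AE_not_in[OF this] show ?thesis by simp
qed

lemma mem_Iv_iff_ceiling:
  assumes "1 \<le> n" "real n * x \<notin> \<int>"
  shows "x \<in> Iv n j \<longleftrightarrow> \<lceil>real n * x\<rceil> = int j"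
proof -
  have "real j - 1 \<in> \<int>" by simp
  with assms(2) have "real n * x \<noteq> real j - 1" by auto
  moreover have "x \<in> Iv n j \<longleftrightarrow> real j - 1 \<le> real n * x \<and> real n * x \<le> real j"
    using assms(1) by (simp add: Iv_def field_simps)
  ultimately show ?thesis by (auto simp: ceiling_eq_iff)
qed

lemma sum_indicator_Iv:
  assumes "1 \<le> n" "0 \<le> x" "x \<le> 1" "real n * x \<notin> \<int>"
  shows "(\<Sum>j=1..n. indicator (Iv n j) x) = (1::real)"
proof -
  define m where "m = nat \<lceil>real n * x\<rceil>"
  have "x \<noteq> 0" using assms(4) by auto
  then have "1 \<le> \<lceil>real n * x\<rceil>" using assms(1,2) by (simp add: one_le_ceiling)
  moreover have "\<lceil>real n * x\<rceil> \<le> int n" using assms(2,3) by (simp add: ceiling_le_iff mult_left_le)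
  ultimately have m: "1 \<le> m" "m \<le> n" "\<lceil>real n * x\<rceil> = int m" unfolding m_def by arith+
  have "(\<Sum>j=1..n. indicator (Iv n j) x) = (\<Sum>j\<in>{1..n}. if j = m then 1 else 0 :: real)"
    using assms(1,4) by (intro sum.cong refl) (simp add: indicator_def mem_Iv_iff_ceiling m(3))
  also have "\<dots> = 1" using m by simp
  finally show ?thesis .
qed

lemma AE_sum_indicator_Iv:
  assumes "1 \<le> n"
  shows "AE x in unit_interval. (\<Sum>j=1..n. indicator (Iv n j) x) = (1::real)"
proof (rule AE_uniform_measureI)
  show "AE x in lborel. x \<in> {0..1} \<longrightarrow> (\<Sum>j=1..n. indicator (Iv n j) x) = (1::real)"
    using AE_not_grid_point[OF assms]
  proof eventually_elim
    case (elim x)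
    show ?case using sum_indicator_Iv[OF assms _ _ elim] by simp
  qed
qed simp

lemma step_approximation_unit_interval:
  assumes "prob_space M" "\<And>n j. j \<in> {1..n} \<Longrightarrow> c n j \<in> borel_measurable M"
    and "(\<lambda>(t, \<omega>). f t \<omega>) \<in> borel_measurable (lborel \<Otimes>\<^sub>M M)"
  shows "step_approximation M unit_interval (\<lambda>n. {1..n}) Iv c f"
proof (intro step_approximation.intro step_approximation_axioms.intro)
  show "pair_prob_space M unit_interval" by (rule pair_prob_spaceI[OF assms(1) prob_space_unit_interval])
  show "1 \<le> n \<Longrightarrow> AE x in unit_interval. (\<Sum>j\<in>{1..n}. indicator (Iv n j) x) = (1::real)" for n
    by (rule AE_sum_indicator_Iv)
  show "j \<in> {1..n} \<Longrightarrow> c n j \<in> borel_measurable M" for n j by (rule assms(2))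
  have "(\<lambda>p. f (snd p) (fst p)) \<in> borel_measurable (M \<Otimes>\<^sub>M lborel)"
    using measurable_pair_swap[OF assms(3)] by (simp add: split_beta')
  then show "(\<lambda>p. f (snd p) (fst p)) \<in> borel_measurable (M \<Otimes>\<^sub>M unit_interval)"
    by (simp add: measurable_cong_sets[OF sets_pair_unit_interval refl])
qed simp_all

lemma sum_square_cells:
  "(\<Sum>g\<in>{1..n} \<times> {1..n}. indicator (case g of (j, k) \<Rightarrow> Iv n k \<times> Iv n j) (t, s) * F g)
    = (\<Sum>j=1..n. \<Sum>k=1..n. indicator (Iv n k) t * indicator (Iv n j) s * F (j, k))"
  for F :: "nat \<times> nat \<Rightarrow> 'b::comm_semiring_1"
  by (simp add: sum.cartesian_product indicator_times case_prod_beta)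

lemma AE_sum_indicator_square:
  assumes "1 \<le> n"
  shows "AE x in unit_interval \<Otimes>\<^sub>M unit_interval.
    (\<Sum>g\<in>{1..n} \<times> {1..n}. indicator (case g of (j, k) \<Rightarrow> Iv n k \<times> Iv n j) x) = (1::real)"
proof -
  interpret U: pair_prob_space unit_interval unit_interval
    by (rule pair_prob_spaceI[OF prob_space_unit_interval prob_space_unit_interval])
  have eq: "(\<Sum>g\<in>{1..n} \<times> {1..n}. indicator (case g of (j, k) \<Rightarrow> Iv n k \<times> Iv n j) (t, s))
      = (\<Sum>k=1..n. indicator (Iv n k) t) * (\<Sum>j=1..n. indicator (Iv n j) s :: real)" for t s
  proof -
    have "(\<Sum>g\<in>{1..n} \<times> {1..n}. indicator (case g of (j, k) \<Rightarrow> Iv n k \<times> Iv n j) (t, s))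
        = (\<Sum>j=1..n. \<Sum>k=1..n. indicator (Iv n k) t * indicator (Iv n j) s :: real)"
      using sum_square_cells[of n t s "\<lambda>_. 1::real"] by simp
    also have "\<dots> = (\<Sum>k=1..n. indicator (Iv n k) t) * (\<Sum>j=1..n. indicator (Iv n j) s)"
      unfolding sum_product by (rule sum.swap)
    finally show ?thesis .
  qed
  show ?thesis
  proof (rule U.AE_pair_measure)
    show "AE t in unit_interval. AE s in unit_interval.
        (\<Sum>g\<in>{1..n} \<times> {1..n}. indicator (case g of (j, k) \<Rightarrow> Iv n k \<times> Iv n j) (t, s)) = (1::real)"
      using AE_sum_indicator_Iv[OF assms]
    proof eventually_elim
      case (elim t)
      show ?case unfolding eq using AE_sum_indicator_Iv[OF assms] by eventually_elim (use elim in simp)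
    qed
    have "(\<Sum>g\<in>{1..n} \<times> {1..n}. indicator (case g of (j, k) \<Rightarrow> Iv n k \<times> Iv n j) x)
        = (\<Sum>k=1..n. indicator (Iv n k) (fst x)) * (\<Sum>j=1..n. indicator (Iv n j) (snd x) :: real)" for x
      using eq[of "fst x" "snd x"] by simp
    then show "{x \<in> space (unit_interval \<Otimes>\<^sub>M unit_interval).
        (\<Sum>g\<in>{1..n} \<times> {1..n}. indicator (case g of (j, k) \<Rightarrow> Iv n k \<times> Iv n j) x) = (1::real)}
        \<in> sets (unit_interval \<Otimes>\<^sub>M unit_interval)"
      by (simp only:) measurable
  qed
qed

lemma step_approximation_unit_square:
  assumes "prob_space M" "\<And>n j k. j \<in> {1..n} \<Longrightarrow> k \<in> {1..n} \<Longrightarrow> c n j k \<in> borel_measurable M"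
    and "(\<lambda>((t, s), \<omega>). f t s \<omega>) \<in> borel_measurable ((lborel \<Otimes>\<^sub>M lborel) \<Otimes>\<^sub>M M)"
  shows "step_approximation M (unit_interval \<Otimes>\<^sub>M unit_interval) (\<lambda>n. {1..n} \<times> {1..n})
    (\<lambda>n (j, k). Iv n k \<times> Iv n j) (\<lambda>n (j, k). c n j k) (\<lambda>x. f (fst x) (snd x))"
proof (intro step_approximation.intro step_approximation_axioms.intro)
  show "pair_prob_space M (unit_interval \<Otimes>\<^sub>M unit_interval)"
    by (intro pair_prob_spaceI prob_space_pair assms(1) prob_space_unit_interval)
  show "(case g of (j, k) \<Rightarrow> Iv n k \<times> Iv n j) \<in> sets (unit_interval \<Otimes>\<^sub>M unit_interval)" for n g
    by (cases g) (simp add: sets_unit_square)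
  show "1 \<le> n \<Longrightarrow> AE x in unit_interval \<Otimes>\<^sub>M unit_interval.
      (\<Sum>g\<in>{1..n} \<times> {1..n}. indicator (case g of (j, k) \<Rightarrow> Iv n k \<times> Iv n j) x) = (1::real)" for n
    by (rule AE_sum_indicator_square)
  show "g \<in> {1..n} \<times> {1..n} \<Longrightarrow> (case g of (j, k) \<Rightarrow> c n j k) \<in> borel_measurable M" for n g
    using assms(2) by (cases g) simp
  have "(\<lambda>p. f (fst (snd p)) (snd (snd p)) (fst p)) \<in> borel_measurable (M \<Otimes>\<^sub>M (lborel \<Otimes>\<^sub>M lborel))"
    using measurable_pair_swap[OF assms(3)] by (simp add: split_beta')
  then show "(\<lambda>p. f (fst (snd p)) (snd (snd p)) (fst p)) \<in> borel_measurable (M \<Otimes>\<^sub>M (unit_interval \<Otimes>\<^sub>M unit_interval))"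
    by (simp add: measurable_cong_sets[OF sets_pair_measure_cong[OF refl sets_unit_square] refl])
qed simp

definition interval_conv_in_measure :: "'a measure \<Rightarrow> (nat \<Rightarrow> nat \<Rightarrow> 'a \<Rightarrow> real) \<Rightarrow> (real \<Rightarrow> 'a \<Rightarrow> real) \<Rightarrow> bool"
  where "interval_conv_in_measure M c f \<longleftrightarrow> (\<forall>\<epsilon>>0. (\<lambda>n. \<integral>\<^sup>+\<omega>. (\<integral>\<^sup>+s\<in>{0..1}. of_bool (\<epsilon> <
    \<bar>(\<Sum>j=1..n. indicator (Iv n j) s * c n j \<omega>) - f s \<omega>\<bar>) \<partial>lborel) \<partial>M) \<longlonglongrightarrow> 0)"

definition interval_conv_Lr :: "real \<Rightarrow> 'a measure \<Rightarrow> (nat \<Rightarrow> nat \<Rightarrow> 'a \<Rightarrow> real) \<Rightarrow> (real \<Rightarrow> 'a \<Rightarrow> real) \<Rightarrow> bool"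
  where "interval_conv_Lr r M c f \<longleftrightarrow> conv_prob_enn M (\<lambda>n \<omega>. \<Sum>j=1..n. \<integral>\<^sup>+s\<in>{0..1}.
    ennreal (indicator (Iv n j) s * \<bar>c n j \<omega> - f s \<omega>\<bar> powr r) \<partial>lborel)"

definition square_conv_in_measure :: "'a measure \<Rightarrow> (nat \<Rightarrow> nat \<Rightarrow> nat \<Rightarrow> 'a \<Rightarrow> real) \<Rightarrow> (real \<Rightarrow> real \<Rightarrow> 'a \<Rightarrow> real) \<Rightarrow> bool"
  where "square_conv_in_measure M c f \<longleftrightarrow> (\<forall>\<epsilon>>0. (\<lambda>n. \<integral>\<^sup>+\<omega>. (\<integral>\<^sup>+t\<in>{0..1}. (\<integral>\<^sup>+s\<in>{0..1}. of_bool (\<epsilon> <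
    \<bar>(\<Sum>j=1..n. \<Sum>k=1..n. indicator (Iv n k) t * indicator (Iv n j) s * c n j k \<omega>) - f t s \<omega>\<bar>)
      \<partial>lborel) \<partial>lborel) \<partial>M) \<longlonglongrightarrow> 0)"

definition square_conv_Lr :: "real \<Rightarrow> 'a measure \<Rightarrow> (nat \<Rightarrow> nat \<Rightarrow> nat \<Rightarrow> 'a \<Rightarrow> real) \<Rightarrow> (real \<Rightarrow> real \<Rightarrow> 'a \<Rightarrow> real) \<Rightarrow> bool"
  where "square_conv_Lr r M c f \<longleftrightarrow> conv_prob_enn M (\<lambda>n \<omega>. \<Sum>j=1..n. \<Sum>k=1..n.
    \<integral>\<^sup>+t\<in>{0..1}. \<integral>\<^sup>+s\<in>{0..1}. ennreal (indicator (Iv n k) t * indicator (Iv n j) s *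
      \<bar>c n j k \<omega> - f t s \<omega>\<bar> powr r) \<partial>lborel \<partial>lborel)"

lemma interval_conv_in_measure_iff_Lr:
  assumes M: "prob_space M" and bounded: "uniformly_Lp_bounded M (\<lambda>n. {1..n}) c"
    and f: "(\<lambda>(t, \<omega>). f t \<omega>) \<in> borel_measurable (lborel \<Otimes>\<^sub>M M)" and r: "0 < r"
  shows "interval_conv_in_measure M c f \<longleftrightarrow> interval_conv_Lr r M c f"
proof -
  interpret step_approximation M unit_interval "\<lambda>n. {1..n}" Iv c f
    using bounded by (intro step_approximation_unit_interval[OF M _ f]) (auto simp: uniformly_Lp_bounded_def)
  have [measurable]: "(\<lambda>s. f s \<omega>) \<in> borel_measurable borel" if "\<omega> \<in> space M" for \<omega>
    using measurable_Pair1[OF f that] by simp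
  have "(\<integral>\<^sup>+\<omega>. \<integral>\<^sup>+x. of_bool (\<epsilon> < \<bar>step n x \<omega> - f x \<omega>\<bar>) \<partial>unit_interval \<partial>M)
      = (\<integral>\<^sup>+\<omega>. (\<integral>\<^sup>+s\<in>{0..1}. of_bool (\<epsilon> < \<bar>(\<Sum>j=1..n. indicator (Iv n j) s * c n j \<omega>) - f s \<omega>\<bar>) \<partial>lborel) \<partial>M)"
    for \<epsilon> n unfolding step_def by (intro nn_integral_cong nn_integral_unit_interval) measurable
  moreover have "conv_prob_enn M (\<lambda>n \<omega>. \<Sum>j\<in>{1..n}. \<integral>\<^sup>+x.
        ennreal (indicator (Iv n j) x * \<bar>c n j \<omega> - f x \<omega>\<bar> powr r) \<partial>unit_interval)
      \<longleftrightarrow> interval_conv_Lr r M c f"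
    unfolding interval_conv_Lr_def
    by (intro conv_prob_enn_eventually_cong always_eventually ballI allI sum.cong refl nn_integral_unit_interval)
      measurable
  ultimately show ?thesis
    using conv_in_measure_iff_conv_prob_cellwise[OF bounded r] unfolding interval_conv_in_measure_def by simp
qed

lemma square_conv_in_measure_iff_Lr:
  assumes M: "prob_space M" and bounded: "uniformly_Lp_bounded M (\<lambda>n. {1..n} \<times> {1..n}) (\<lambda>n (j, k). c n j k)"
    and f: "(\<lambda>((t, s), \<omega>). f t s \<omega>) \<in> borel_measurable ((lborel \<Otimes>\<^sub>M lborel) \<Otimes>\<^sub>M M)" and r: "0 < r"
  shows "square_conv_in_measure M c f \<longleftrightarrow> square_conv_Lr r M c f"
proof -
  interpret step_approximation M "unit_interval \<Otimes>\<^sub>M unit_interval" "\<lambda>n. {1..n} \<times> {1..n}"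
      "\<lambda>n (j, k). Iv n k \<times> Iv n j" "\<lambda>n (j, k). c n j k" "\<lambda>x. f (fst x) (snd x)"
    using bounded by (intro step_approximation_unit_square[OF M _ f]) (auto simp: uniformly_Lp_bounded_def)
  have [measurable]: "(\<lambda>x. f (fst x) (snd x) \<omega>) \<in> borel_measurable (lborel \<Otimes>\<^sub>M lborel)" if "\<omega> \<in> space M" for \<omega>
    using measurable_Pair1[OF f that] by (simp add: split_beta')
  have "(\<integral>\<^sup>+\<omega>. \<integral>\<^sup>+x. of_bool (\<epsilon> < \<bar>step n x \<omega> - f (fst x) (snd x) \<omega>\<bar>) \<partial>(unit_interval \<Otimes>\<^sub>M unit_interval) \<partial>M)
      = (\<integral>\<^sup>+\<omega>. (\<integral>\<^sup>+t\<in>{0..1}. (\<integral>\<^sup>+s\<in>{0..1}. of_bool (\<epsilon> <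
          \<bar>(\<Sum>j=1..n. \<Sum>k=1..n. indicator (Iv n k) t * indicator (Iv n j) s * c n j k \<omega>) - f t s \<omega>\<bar>)
          \<partial>lborel) \<partial>lborel) \<partial>M)" for \<epsilon> n
  proof (intro nn_integral_cong)
    fix \<omega> assume [measurable]: "\<omega> \<in> space M"
    have "step n x \<omega> = (\<Sum>j=1..n. \<Sum>k=1..n. indicator (Iv n k) (fst x) * indicator (Iv n j) (snd x) * c n j k \<omega>)"
      for x using sum_square_cells[of n "fst x" "snd x" "\<lambda>g. (case g of (j, k) \<Rightarrow> c n j k) \<omega>"]
      unfolding step_def by simp
    moreover have "(\<lambda>x. of_bool (\<epsilon> < \<bar>(\<Sum>j=1..n. \<Sum>k=1..n. indicator (Iv n k) (fst x) * indicator (Iv n j) (snd x)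
        * c n j k \<omega>) - f (fst x) (snd x) \<omega>\<bar>) :: ennreal) \<in> borel_measurable (lborel \<Otimes>\<^sub>M lborel)"
      by measurable
    ultimately show "(\<integral>\<^sup>+x. of_bool (\<epsilon> < \<bar>step n x \<omega> - f (fst x) (snd x) \<omega>\<bar>) \<partial>(unit_interval \<Otimes>\<^sub>M unit_interval))
        = (\<integral>\<^sup>+t\<in>{0..1}. (\<integral>\<^sup>+s\<in>{0..1}. of_bool (\<epsilon> <
          \<bar>(\<Sum>j=1..n. \<Sum>k=1..n. indicator (Iv n k) t * indicator (Iv n j) s * c n j k \<omega>) - f t s \<omega>\<bar>)
          \<partial>lborel) \<partial>lborel)"
      by (simp add: nn_integral_unit_square)
  qed
  moreover have "conv_prob_enn M (\<lambda>n \<omega>. \<Sum>g\<in>{1..n} \<times> {1..n}. \<integral>\<^sup>+x.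
        ennreal (indicator (case g of (j, k) \<Rightarrow> Iv n k \<times> Iv n j) x * \<bar>(case g of (j, k) \<Rightarrow> c n j k) \<omega>
          - f (fst x) (snd x) \<omega>\<bar> powr r) \<partial>(unit_interval \<Otimes>\<^sub>M unit_interval))
      \<longleftrightarrow> square_conv_Lr r M c f"
    unfolding square_conv_Lr_def
  proof (intro conv_prob_enn_eventually_cong always_eventually allI ballI)
    fix n \<omega> assume [measurable]: "\<omega> \<in> space M"
    have "(\<lambda>x. ennreal (indicator (Iv n k) (fst x) * indicator (Iv n j) (snd x) * \<bar>c n j k \<omega> - f (fst x) (snd x) \<omega>\<bar> powr r))
        \<in> borel_measurable (lborel \<Otimes>\<^sub>M lborel)" for j k
      by measurable
    then show "(\<Sum>g\<in>{1..n} \<times> {1..n}. \<integral>\<^sup>+x. ennreal (indicator (case g of (j, k) \<Rightarrow> Iv n k \<times> Iv n j) x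
          * \<bar>(case g of (j, k) \<Rightarrow> c n j k) \<omega> - f (fst x) (snd x) \<omega>\<bar> powr r) \<partial>(unit_interval \<Otimes>\<^sub>M unit_interval))
        = (\<Sum>j=1..n. \<Sum>k=1..n. \<integral>\<^sup>+t\<in>{0..1}. \<integral>\<^sup>+s\<in>{0..1}. ennreal (indicator (Iv n k) t * indicator (Iv n j) s *
          \<bar>c n j k \<omega> - f t s \<omega>\<bar> powr r) \<partial>lborel \<partial>lborel)"
      by (simp add: sum.cartesian_product' indicator_times nn_integral_unit_square)
  qed
  ultimately show ?thesis
    using conv_in_measure_iff_conv_prob_cellwise[OF bounded r] unfolding square_conv_in_measure_def by simp
qed

subsection \<open>Moments of cell averages\<close>

lemma weighted_power_mean_le:
  fixes w h :: "'b \<Rightarrow> real" and p :: nat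
  assumes w01: "\<And>y. w y = 0 \<or> w y = 1" and h0: "\<And>y. 0 \<le> h y"
    and int: "integrable \<mu> w" "integrable \<mu> (\<lambda>y. w y * h y)" "integrable \<mu> (\<lambda>y. w y * h y ^ p)"
    and \<alpha>: "(\<integral>y. w y \<partial>\<mu>) = \<alpha>" "0 < \<alpha>" and p: "1 \<le> p"
  shows "((1 / \<alpha>) * (\<integral>y. w y * h y \<partial>\<mu>)) ^ p \<le> (1 / \<alpha>) * (\<integral>y. w y * h y ^ p \<partial>\<mu>)"
proof -
  define c where "c = (1 / \<alpha>) * (\<integral>y. w y * h y \<partial>\<mu>)"
  have "0 \<le> w y * h y" for y using w01[of y] h0[of y] by auto
  then have "0 \<le> c" unfolding c_def using \<alpha> by (simp add: integral_nonneg_AE)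
  have "w y * c ^ p + real p * c ^ (p - 1) * (w y * h y - w y * c) \<le> w y * h y ^ p" for y
    using w01[of y] power_ge_tangent[OF h0 \<open>0 \<le> c\<close> p] by auto
  then have "(\<integral>y. w y * c ^ p + real p * c ^ (p - 1) * (w y * h y - w y * c) \<partial>\<mu>) \<le> (\<integral>y. w y * h y ^ p \<partial>\<mu>)"
    using int by (intro integral_mono) auto
  moreover have "(\<integral>y. w y * c ^ p + real p * c ^ (p - 1) * (w y * h y - w y * c) \<partial>\<mu>) = \<alpha> * c ^ p"
    using int \<alpha> by (simp add: c_def)
  ultimately have "\<alpha> * c ^ p \<le> (\<integral>y. w y * h y ^ p \<partial>\<mu>)" by simp
  then have "c ^ p \<le> (1 / \<alpha>) * (\<integral>y. w y * h y ^ p \<partial>\<mu>)" using \<alpha> by (simp add: field_simps)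
  then show ?thesis unfolding c_def .
qed

lemma power_abs_average_le:
  fixes w g :: "'b \<Rightarrow> real" and p :: nat
  assumes w01: "\<And>y. w y = 0 \<or> w y = 1" and [measurable]: "w \<in> borel_measurable \<mu>" "g \<in> borel_measurable \<mu>"
    and w_int: "(\<integral>\<^sup>+y. ennreal (w y) \<partial>\<mu>) = ennreal \<alpha>" and \<alpha>: "0 < \<alpha>" and p: "1 \<le> p"
  shows "ennreal (\<bar>(1 / \<alpha>) * (\<integral>y. w y * g y \<partial>\<mu>)\<bar> ^ p)
    \<le> ennreal (1 / \<alpha>) * (\<integral>\<^sup>+y. ennreal (w y * \<bar>g y\<bar> ^ p) \<partial>\<mu>)"
proof (cases "integrable \<mu> (\<lambda>y. w y * g y) \<and> (\<integral>\<^sup>+y. ennreal (w y * \<bar>g y\<bar> ^ p) \<partial>\<mu>) < \<top>")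
  case False
  then consider "\<not> integrable \<mu> (\<lambda>y. w y * g y)" | "(\<integral>\<^sup>+y. ennreal (w y * \<bar>g y\<bar> ^ p) \<partial>\<mu>) = \<top>"
    using less_top by blast
  then show ?thesis
  proof cases
    case 1
    then show ?thesis using p by (simp add: not_integrable_integral_eq power_0_left)
  next
    case 2
    then show ?thesis using \<alpha> by (simp add: ennreal_mult_top)
  qed
next
  case True
  have w0: "0 \<le> w y" for y using w01[of y] by auto
  have abs_eq: "\<bar>w y * g y\<bar> = w y * \<bar>g y\<bar>" for y using w0[of y] by (simp add: abs_mult)
  have int: "integrable \<mu> w" "integrable \<mu> (\<lambda>y. w y * \<bar>g y\<bar>)" "integrable \<mu> (\<lambda>y. w y * \<bar>g y\<bar> ^ p)"
    using True w_int w0 integrable_abs[of \<mu> "\<lambda>y. w y * g y"] unfolding abs_eq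
    by (auto intro!: integrableI_nn_integral_finite[where x=\<alpha>] integrableI_bounded simp: less_top[symmetric])
  have "(\<integral>y. w y \<partial>\<mu>) = \<alpha>" using w_int w0 \<alpha> by (subst integral_eq_nn_integral) auto
  have "\<bar>\<integral>y. w y * g y \<partial>\<mu>\<bar> \<le> (\<integral>y. w y * \<bar>g y\<bar> \<partial>\<mu>)"
    using integral_abs_bound[of \<mu> "\<lambda>y. w y * g y"] by (simp only: abs_eq)
  then have "\<bar>(1 / \<alpha>) * (\<integral>y. w y * g y \<partial>\<mu>)\<bar> \<le> (1 / \<alpha>) * (\<integral>y. w y * \<bar>g y\<bar> \<partial>\<mu>)"
    using \<alpha> by (simp add: abs_mult divide_right_mono)
  then have "\<bar>(1 / \<alpha>) * (\<integral>y. w y * g y \<partial>\<mu>)\<bar> ^ p \<le> ((1 / \<alpha>) * (\<integral>y. w y * \<bar>g y\<bar> \<partial>\<mu>)) ^ p"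
    by (intro power_mono) auto
  also have "\<dots> \<le> (1 / \<alpha>) * (\<integral>y. w y * \<bar>g y\<bar> ^ p \<partial>\<mu>)"
    by (rule weighted_power_mean_le[OF w01 _ int]) (use \<alpha> \<open>(\<integral>y. w y \<partial>\<mu>) = \<alpha>\<close> p in auto)
  finally show ?thesis
    using int(3) w0 \<alpha> by (simp add: nn_integral_eq_integral ennreal_mult[symmetric] ennreal_leI)
qed

lemma nn_integral_weighted_moment_le:
  fixes w :: "'b \<Rightarrow> real" and G :: "'b \<Rightarrow> 'a \<Rightarrow> real"
  assumes "sigma_finite_measure \<mu>" "prob_space M"
    and [measurable]: "w \<in> borel_measurable \<mu>" "(\<lambda>(y, \<omega>). G y \<omega>) \<in> borel_measurable (\<mu> \<Otimes>\<^sub>M M)"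
    and w0: "\<And>y. 0 \<le> w y" and w_int: "(\<integral>\<^sup>+y. ennreal (w y) \<partial>\<mu>) = ennreal \<alpha>"
    and bound: "\<And>y. y \<in> space \<mu> \<Longrightarrow> w y \<noteq> 0 \<Longrightarrow> (\<integral>\<^sup>+\<omega>. ennreal (\<bar>G y \<omega>\<bar> ^ p) \<partial>M) \<le> ennreal C"
  shows "(\<integral>\<^sup>+\<omega>. \<integral>\<^sup>+y. ennreal (w y * \<bar>G y \<omega>\<bar> ^ p) \<partial>\<mu> \<partial>M) \<le> ennreal \<alpha> * ennreal C"
proof -
  interpret pair_sigma_finite \<mu> M
    using assms(1,2) by (simp add: pair_sigma_finite_def prob_space_imp_sigma_finite)
  have [measurable]: "(\<lambda>x. G (fst x) (snd x)) \<in> borel_measurable (\<mu> \<Otimes>\<^sub>M M)"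
    using assms(4) by (simp add: split_beta')
  have "(\<integral>\<^sup>+\<omega>. \<integral>\<^sup>+y. ennreal (w y * \<bar>G y \<omega>\<bar> ^ p) \<partial>\<mu> \<partial>M)
      = (\<integral>\<^sup>+y. \<integral>\<^sup>+\<omega>. ennreal (w y) * ennreal (\<bar>G y \<omega>\<bar> ^ p) \<partial>M \<partial>\<mu>)"
    using w0 by (subst Fubini') (simp_all add: ennreal_mult)
  also have "\<dots> \<le> (\<integral>\<^sup>+y. ennreal (w y) * ennreal C \<partial>\<mu>)"
  proof (intro nn_integral_mono)
    fix y assume y: "y \<in> space \<mu>"
    have [measurable]: "(\<lambda>\<omega>. G y \<omega>) \<in> borel_measurable M" using measurable_Pair2[OF assms(4) y] by simp
    have "(\<integral>\<^sup>+\<omega>. ennreal (w y) * ennreal (\<bar>G y \<omega>\<bar> ^ p) \<partial>M) = ennreal (w y) * (\<integral>\<^sup>+\<omega>. ennreal (\<bar>G y \<omega>\<bar> ^ p) \<partial>M)"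
      by (rule nn_integral_cmult) measurable
    also have "\<dots> \<le> ennreal (w y) * ennreal C" using bound[OF y] by (cases "w y = 0") (auto intro: mult_left_mono)
    finally show "(\<integral>\<^sup>+\<omega>. ennreal (w y) * ennreal (\<bar>G y \<omega>\<bar> ^ p) \<partial>M) \<le> ennreal (w y) * ennreal C" .
  qed
  also have "\<dots> = ennreal \<alpha> * ennreal C" by (simp add: nn_integral_multc w_int)
  finally show ?thesis .
qed

lemma nn_integral_power_average_le:
  fixes w :: "'b \<Rightarrow> real" and G :: "'b \<Rightarrow> 'a \<Rightarrow> real" and p :: nat
  assumes "sigma_finite_measure \<mu>" "prob_space M"
    and w01: "\<And>y. w y = 0 \<or> w y = 1" and [measurable]: "w \<in> borel_measurable \<mu>"
    and w_int: "(\<integral>\<^sup>+y. ennreal (w y) \<partial>\<mu>) = ennreal \<alpha>" and \<alpha>: "0 < \<alpha>" and p: "1 \<le> p"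
    and G: "(\<lambda>(y, \<omega>). G y \<omega>) \<in> borel_measurable (\<mu> \<Otimes>\<^sub>M M)"
    and bound: "\<And>y. y \<in> space \<mu> \<Longrightarrow> w y \<noteq> 0 \<Longrightarrow> (\<integral>\<^sup>+\<omega>. ennreal (\<bar>G y \<omega>\<bar> ^ p) \<partial>M) \<le> ennreal C"
    and C: "0 \<le> C"
  shows "(\<integral>\<^sup>+\<omega>. ennreal (\<bar>(1 / \<alpha>) * (\<integral>y. w y * G y \<omega> \<partial>\<mu>)\<bar> ^ p) \<partial>M) \<le> ennreal C"
proof -
  have [measurable]: "(\<lambda>x. G (fst x) (snd x)) \<in> borel_measurable (\<mu> \<Otimes>\<^sub>M M)"
    using G by (simp add: split_beta')
  have "(\<integral>\<^sup>+\<omega>. ennreal (\<bar>(1 / \<alpha>) * (\<integral>y. w y * G y \<omega> \<partial>\<mu>)\<bar> ^ p) \<partial>M)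
      \<le> (\<integral>\<^sup>+\<omega>. ennreal (1 / \<alpha>) * (\<integral>\<^sup>+y. ennreal (w y * \<bar>G y \<omega>\<bar> ^ p) \<partial>\<mu>) \<partial>M)"
  proof (intro nn_integral_mono)
    fix \<omega> assume "\<omega> \<in> space M"
    then have g: "(\<lambda>y. G y \<omega>) \<in> borel_measurable \<mu>" using measurable_Pair1[OF G] by simp
    show "ennreal (\<bar>(1 / \<alpha>) * (\<integral>y. w y * G y \<omega> \<partial>\<mu>)\<bar> ^ p)
        \<le> ennreal (1 / \<alpha>) * (\<integral>\<^sup>+y. ennreal (w y * \<bar>G y \<omega>\<bar> ^ p) \<partial>\<mu>)"
      by (rule power_abs_average_le[OF w01 _ g w_int \<alpha> p]) measurable
  qed
  also have "\<dots> = ennreal (1 / \<alpha>) * (\<integral>\<^sup>+\<omega>. \<integral>\<^sup>+y. ennreal (w y * \<bar>G y \<omega>\<bar> ^ p) \<partial>\<mu> \<partial>M)"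
  proof (intro nn_integral_cmult sigma_finite_measure.borel_measurable_nn_integral[OF assms(1)])
    have [measurable]: "(\<lambda>x. G (snd x) (fst x)) \<in> borel_measurable (M \<Otimes>\<^sub>M \<mu>)"
      using measurable_pair_swap[OF G] by (simp add: split_beta')
    show "(\<lambda>(\<omega>, y). ennreal (w y * \<bar>G y \<omega>\<bar> ^ p)) \<in> borel_measurable (M \<Otimes>\<^sub>M \<mu>)" by measurable
  qed
  also have "\<dots> \<le> ennreal (1 / \<alpha>) * (ennreal \<alpha> * ennreal C)"
  proof (intro mult_left_mono)
    have "0 \<le> w y" for y using w01[of y] by auto
    then show "(\<integral>\<^sup>+\<omega>. \<integral>\<^sup>+y. ennreal (w y * \<bar>G y \<omega>\<bar> ^ p) \<partial>\<mu> \<partial>M) \<le> ennreal \<alpha> * ennreal C"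
      by (rule nn_integral_weighted_moment_le[OF assms(1,2,4) G _ w_int bound])
  qed simp
  also have "\<dots> = ennreal C" using \<alpha> C by (simp flip: ennreal_mult)
  finally show ?thesis .
qed

subsection \<open>Discretised Malliavin derivatives\<close>

lemma sigma_finite_Pt: "sigma_finite_measure (Pt k)"
proof -
  have "product_sigma_finite (\<lambda>_::nat. restrict_space lborel {0::real..})"
    unfolding product_sigma_finite_def
    by (auto intro: sigma_finite_measure_restrict_space sigma_finite_lborel)
  then show ?thesis unfolding Pt_def by (rule product_sigma_finite.sigma_finite) simp
qed

lemma space_Pt: "space (Pt k) = PiE {..<k} (\<lambda>_. {0..})"
  unfolding Pt_def by (simp add: space_PiM space_restrict_space)

lemma Pt_0: "Pt 0 = count_space {\<lambda>_. undefined}"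
  unfolding Pt_def by (simp add: PiM_empty)

lemma measurable_indicator_coordinate[measurable]:
  assumes "i < k" "A \<in> sets borel"
  shows "(\<lambda>ts. indicator A (ts i) :: real) \<in> borel_measurable (Pt k)"
proof -
  have "(\<lambda>ts. ts i) \<in> measurable (Pt k) (restrict_space lborel {0..})"
    unfolding Pt_def using assms(1) by (intro measurable_component_singleton) simp
  moreover have "(indicator A :: real \<Rightarrow> real) \<in> borel_measurable (restrict_space lborel {0..})"
    using assms(2) by (intro measurable_restrict_space1) simp
  ultimately show ?thesis by (rule measurable_compose)
qed

lemma emeasure_Pt_cube:
  assumes "A \<in> sets borel" "A \<subseteq> {0..}"
  shows "emeasure (Pt m) (PiE {..<m} (\<lambda>_. A)) = emeasure lborel A ^ m"
proof -
  interpret product_sigma_finite "\<lambda>_::nat. restrict_space lborel {0::real..}"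
    unfolding product_sigma_finite_def by (auto intro: sigma_finite_measure_restrict_space sigma_finite_lborel)
  have "emeasure (Pt m) (PiE {..<m} (\<lambda>_. A)) = (\<Prod>i<m. emeasure (restrict_space lborel {0..}) A)"
    unfolding Pt_def using assms by (subst emeasure_PiM) (auto simp: sets_restrict_space_iff)
  also have "\<dots> = (\<Prod>i<m. emeasure lborel A)" using assms by (subst emeasure_restrict_space) auto
  finally show ?thesis by simp
qed

lemma Iv_subset: "1 \<le> k \<Longrightarrow> k \<le> n \<Longrightarrow> Iv n k \<subseteq> {0..1}"
  unfolding Iv_def by (auto simp: field_simps intro: order_trans[of _ "real k"])

lemma emeasure_Iv: "1 \<le> n \<Longrightarrow> emeasure lborel (Iv n k) = ennreal (1 / real n)"
  unfolding Iv_def by (simp add: divide_right_mono diff_divide_distrib[symmetric])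

lemma nn_integral_Iv_cube:
  assumes "1 \<le> k" "k \<le> n"
  shows "(\<integral>\<^sup>+ts. ennreal (\<Prod>i<m. indicator (Iv n k) (ts i)) \<partial>Pt m) = ennreal (1 / real n ^ m)"
proof -
  have sub: "Iv n k \<subseteq> {0..}" using Iv_subset[OF assms] by auto
  have "(\<Prod>i<m. indicator (Iv n k) (ts i) :: real) = indicator (PiE {..<m} (\<lambda>_. Iv n k)) ts"
    if "ts \<in> space (Pt m)" for ts
    using that unfolding indicator_def by (auto simp: space_Pt PiE_iff prod_zero_iff)
  then have "(\<integral>\<^sup>+ts. ennreal (\<Prod>i<m. indicator (Iv n k) (ts i)) \<partial>Pt m)
      = (\<integral>\<^sup>+ts. indicator (PiE {..<m} (\<lambda>_. Iv n k)) ts \<partial>Pt m)"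
    by (intro nn_integral_cong) (simp add: ennreal_indicator)
  also have "\<dots> = emeasure lborel (Iv n k) ^ m"
  proof -
    have "PiE {..<m} (\<lambda>_. Iv n k) \<in> sets (Pt m)"
      using sub unfolding Pt_def by (intro sets_PiM_I_finite) (auto simp: sets_restrict_space_iff)
    then show ?thesis using sub by (simp add: emeasure_Pt_cube)
  qed
  finally show ?thesis using emeasure_Iv[of n k] assms by (simp add: power_divide ennreal_power)
qed

text \<open>The pairing of D^m F, given by its density G, with the indicator of the cube I_k^m;
  D1 and D11 are the cases m = 1 and m = 2.\<close>
definition cell_integral :: "nat \<Rightarrow> nat \<Rightarrow> nat \<Rightarrow> ((nat \<Rightarrow> real) \<Rightarrow> 'a \<Rightarrow> real) \<Rightarrow> 'a \<Rightarrow> real"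
  where "cell_integral n k m G \<omega> = (\<integral>ts. (\<Prod>i<m. indicator (Iv n k) (ts i)) * G ts \<omega> \<partial>Pt m)"

lemma D1_eq_cell_integral: "D1 n k G = cell_integral n k 1 G"
  by (simp add: fun_eq_iff D1_def cell_integral_def)

lemma D11_eq_cell_integral: "D11 n k G = cell_integral n k 2 G"
  by (simp add: fun_eq_iff D11_def cell_integral_def numeral_2_eq_2 mult.assoc)

lemma borel_measurable_cell_integral:
  assumes "(\<lambda>(ts, \<omega>). G ts \<omega>) \<in> borel_measurable (Pt m \<Otimes>\<^sub>M M)"
  shows "cell_integral n k m G \<in> borel_measurable M"
proof -
  have [measurable]: "(\<lambda>x. G (snd x) (fst x)) \<in> borel_measurable (M \<Otimes>\<^sub>M Pt m)"
    using measurable_pair_swap[OF assms] by (simp add: split_beta')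
  have "(\<lambda>(\<omega>, ts). (\<Prod>i<m. indicator (Iv n k) (ts i)) * G ts \<omega>) \<in> borel_measurable (M \<Otimes>\<^sub>M Pt m)"
    by measurable
  from sigma_finite_measure.borel_measurable_lebesgue_integral[OF sigma_finite_Pt this]
  show ?thesis unfolding cell_integral_def[abs_def] by simp
qed

lemma nn_integral_scaled_cell_integral_le:
  assumes "prob_space M" "1 \<le> k" "k \<le> n" "1 \<le> p"
    and G: "(\<lambda>(ts, \<omega>). G ts \<omega>) \<in> borel_measurable (Pt m \<Otimes>\<^sub>M M)"
    and bound: "\<forall>ts\<in>cube m. pmoment M (real p) (G ts) \<le> ennreal C" and "0 \<le> C"
  shows "(\<integral>\<^sup>+\<omega>. ennreal (\<bar>real n ^ m * cell_integral n k m G \<omega>\<bar> ^ p) \<partial>M) \<le> ennreal C"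
proof -
  have "(\<integral>\<^sup>+\<omega>. ennreal (\<bar>(1 / (1 / real n ^ m)) *
      (\<integral>ts. (\<Prod>i<m. indicator (Iv n k) (ts i)) * G ts \<omega> \<partial>Pt m)\<bar> ^ p) \<partial>M) \<le> ennreal C"
  proof (rule nn_integral_power_average_le[OF sigma_finite_Pt assms(1) _ _ nn_integral_Iv_cube[OF assms(2,3)]
        _ assms(4) G _ assms(7)])
    show "(\<Prod>i<m. indicator (Iv n k) (ts i)) = (0::real) \<or> (\<Prod>i<m. indicator (Iv n k) (ts i)) = (1::real)" for ts
      by (cases "\<forall>i<m. ts i \<in> Iv n k") (auto simp: indicator_def prod_zero_iff)
    show "(\<lambda>ts. \<Prod>i<m. indicator (Iv n k) (ts i) :: real) \<in> borel_measurable (Pt m)" by measurable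
    show "0 < 1 / real n ^ m" using assms(2,3) by simp
    fix ts assume ts: "ts \<in> space (Pt m)" "(\<Prod>i<m. indicator (Iv n k) (ts i)) \<noteq> (0::real)"
    then have "ts \<in> cube m"
      using Iv_subset[OF assms(2,3)] by (auto simp: space_Pt cube_def PiE_iff indicator_def prod_zero_iff)
    then show "(\<integral>\<^sup>+\<omega>. ennreal (\<bar>G ts \<omega>\<bar> ^ p) \<partial>M) \<le> ennreal C"
      using bound assms(4) unfolding pmoment_def by (simp add: powr_realpow')
  qed
  then show ?thesis by (simp add: cell_integral_def)
qed

lemma uniformly_Lp_bounded_scaled_cell_integral:
  assumes M: "prob_space M"
    and G: "\<And>n j. j \<in> {1..n} \<Longrightarrow> (\<lambda>(ts, \<omega>). G n j ts \<omega>) \<in> borel_measurable (Pt m \<Otimes>\<^sub>M M)"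
    and bound: "\<And>p. 1 < p \<Longrightarrow> \<exists>C. \<forall>n j. j \<in> {1..n} \<longrightarrow> (\<forall>ts\<in>cube m. pmoment M p (G n j ts) \<le> ennreal C)"
  shows "uniformly_Lp_bounded M (\<lambda>n. {1..n} \<times> {1..n}) (\<lambda>n (j, k) \<omega>. real n ^ m * cell_integral n k m (G n j) \<omega>)"
proof (rule prob_space.uniformly_Lp_boundedI[OF M])
  fix n :: nat and g :: "nat \<times> nat" assume "g \<in> {1..n} \<times> {1..n}"
  then show "(case g of (j, k) \<Rightarrow> \<lambda>\<omega>. real n ^ m * cell_integral n k m (G n j) \<omega>) \<in> borel_measurable M"
    using borel_measurable_cell_integral[OF G] by (cases g) auto
next
  fix p :: nat assume p: "2 \<le> p"
  obtain C where C: "\<forall>n j. j \<in> {1..n} \<longrightarrow> (\<forall>ts\<in>cube m. pmoment M (real p) (G n j ts) \<le> ennreal C)"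
    using bound[of "real p"] p by auto
  have "\<forall>ts\<in>cube m. pmoment M (real p) (G n j ts) \<le> ennreal (max C 0)" if "j \<in> {1..n}" for n j
    using C that order.trans[OF _ ennreal_leI[of C "max C 0"]] by auto
  then have "(\<integral>\<^sup>+\<omega>. ennreal (\<bar>real n ^ m * cell_integral n k m (G n j) \<omega>\<bar> ^ p) \<partial>M) \<le> ennreal (max C 0)"
    if "j \<in> {1..n}" "k \<in> {1..n}" for n j k
    using that p by (intro nn_integral_scaled_cell_integral_le[OF M _ _ _ G]) auto
  then show "\<exists>C. \<forall>n. \<forall>g\<in>{1..n} \<times> {1..n}.
      (\<integral>\<^sup>+\<omega>. ennreal (\<bar>(case g of (j, k) \<Rightarrow> \<lambda>\<omega>. real n ^ m * cell_integral n k m (G n j) \<omega>) \<omega>\<bar> ^ p) \<partial>M)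
        \<le> ennreal C"
    by (intro exI[of _ "max C 0"]) auto
qed

lemma power2_powr_half: "(a\<^sup>2) powr (p / 2) = \<bar>a\<bar> powr p" for a p :: real
proof (cases "a = 0")
  case False
  then have "a\<^sup>2 = \<bar>a\<bar> powr 2" by (simp add: powr_realpow)
  then have "(a\<^sup>2) powr (p / 2) = (\<bar>a\<bar> powr 2) powr (p / 2)" by (simp only:)
  also have "\<dots> = \<bar>a\<bar> powr (2 * (p / 2))" by (rule powr_powr)
  finally show ?thesis by simp
qed simp

lemma Lp_L2_dist_0:
  "Lp_L2_dist M p 0 P G = (\<integral>\<^sup>+\<omega>. ennreal (\<bar>P (\<lambda>_. undefined) \<omega> - G (\<lambda>_. undefined) \<omega>\<bar> powr p) \<partial>M)"
  unfolding Lp_L2_dist_def Pt_0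
  by (intro nn_integral_cong) (simp add: nn_integral_count_space_finite ennpow_def power2_powr_half)

lemma poly_deriv_0: "poly_deriv W R 0 ts \<omega> = poly_val W R \<omega>"
  unfolding poly_deriv_def poly_val_def
  by (intro arg_cong[where f=sum_list] map_cong refl)
    (auto simp: prod.list_conv_set_nth atLeast0LessThan)

lemma borel_measurable_poly_val:
  assumes "isonormal M W" "valid_rep R"
  shows "poly_val W R \<in> borel_measurable M"
proof -
  have [measurable]: "W h \<in> borel_measurable M" if "L2plus h" for h
    using assms(1) that unfolding isonormal_def by blast
  have "(\<lambda>\<omega>. prod_list (map (\<lambda>h. W h \<omega>) hs)) \<in> borel_measurable M" if "\<forall>h\<in>set hs. L2plus h" for hs
    using that by (induction hs) auto
  with assms(2) show ?thesis
    unfolding poly_val_def[abs_def] valid_rep_def by (induction R) (auto split: prod.splits)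
qed

lemma AE_eq_of_Lp_limits:
  fixes Y :: "nat \<Rightarrow> 'a \<Rightarrow> real"
  assumes [measurable]: "\<And>m. Y m \<in> borel_measurable M" "F \<in> borel_measurable M" "G \<in> borel_measurable M"
    and p: "0 \<le> p"
    and F: "(\<lambda>m. \<integral>\<^sup>+\<omega>. ennreal (\<bar>Y m \<omega> - F \<omega>\<bar> powr p) \<partial>M) \<longlonglongrightarrow> 0"
    and G: "(\<lambda>m. \<integral>\<^sup>+\<omega>. ennreal (\<bar>Y m \<omega> - G \<omega>\<bar> powr p) \<partial>M) \<longlonglongrightarrow> 0"
  shows "AE \<omega> in M. F \<omega> = G \<omega>"
proof -
  have bound: "(\<integral>\<^sup>+\<omega>. ennreal (\<bar>F \<omega> - G \<omega>\<bar> powr p) \<partial>M)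
      \<le> ennreal (2 powr p) * ((\<integral>\<^sup>+\<omega>. ennreal (\<bar>Y m \<omega> - F \<omega>\<bar> powr p) \<partial>M) + (\<integral>\<^sup>+\<omega>. ennreal (\<bar>Y m \<omega> - G \<omega>\<bar> powr p) \<partial>M))"
    for m
  proof -
    have "ennreal (\<bar>F \<omega> - G \<omega>\<bar> powr p)
        \<le> ennreal (2 powr p) * (ennreal (\<bar>Y m \<omega> - F \<omega>\<bar> powr p) + ennreal (\<bar>Y m \<omega> - G \<omega>\<bar> powr p))" for \<omega>
    proof -
      have "\<bar>F \<omega> - G \<omega>\<bar> powr p \<le> 2 powr p * (\<bar>F \<omega> - Y m \<omega>\<bar> powr p + \<bar>Y m \<omega> - G \<omega>\<bar> powr p)"
        using abs_add_powr_le[OF p, of "F \<omega> - Y m \<omega>" "Y m \<omega> - G \<omega>"] by simp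
      then show ?thesis by (simp add: abs_minus_commute ennreal_leI flip: ennreal_mult ennreal_plus)
    qed
    then have "(\<integral>\<^sup>+\<omega>. ennreal (\<bar>F \<omega> - G \<omega>\<bar> powr p) \<partial>M) \<le> (\<integral>\<^sup>+\<omega>. ennreal (2 powr p) *
        (ennreal (\<bar>Y m \<omega> - F \<omega>\<bar> powr p) + ennreal (\<bar>Y m \<omega> - G \<omega>\<bar> powr p)) \<partial>M)"
      by (rule nn_integral_mono)
    then show ?thesis by (simp add: nn_integral_cmult nn_integral_add)
  qed
  have "(\<lambda>m. ennreal (2 powr p) * ((\<integral>\<^sup>+\<omega>. ennreal (\<bar>Y m \<omega> - F \<omega>\<bar> powr p) \<partial>M)
      + (\<integral>\<^sup>+\<omega>. ennreal (\<bar>Y m \<omega> - G \<omega>\<bar> powr p) \<partial>M))) \<longlonglongrightarrow> ennreal (2 powr p) * (0 + 0)"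
    by (intro ennreal_tendsto_cmult tendsto_add F G) simp
  then have "(\<integral>\<^sup>+\<omega>. ennreal (\<bar>F \<omega> - G \<omega>\<bar> powr p) \<partial>M) \<le> ennreal (2 powr p) * (0 + 0)"
    by (rule tendsto_le[OF sequentially_bot _ tendsto_const]) (use bound in simp)
  then have "AE \<omega> in M. ennreal (\<bar>F \<omega> - G \<omega>\<bar> powr p) = 0"
    by (subst nn_integral_0_iff_AE[symmetric]) auto
  then show ?thesis by eventually_elim simp
qed

lemma malliavin_density_0_AE_eq:
  assumes "isonormal M W" "malliavin_density M W F 0 G" "F \<in> borel_measurable M"
  shows "AE \<omega> in M. F \<omega> = G (\<lambda>_. undefined) \<omega>"
proof -
  obtain p R where p: "1 \<le> p" and R: "\<And>m. valid_rep (R m)"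
    and F: "(\<lambda>m. pmoment M p (\<lambda>\<omega>. poly_val W (R m) \<omega> - F \<omega>)) \<longlonglongrightarrow> 0"
    and G: "(\<lambda>m. Lp_L2_dist M p 0 (poly_deriv W (R m) 0) G) \<longlonglongrightarrow> 0"
    and G_meas: "(\<lambda>(ts, \<omega>). G ts \<omega>) \<in> borel_measurable (Pt 0 \<Otimes>\<^sub>M M)"
    using assms(2) unfolding malliavin_density_def by blast
  have "(\<lambda>\<omega>. G (\<lambda>_. undefined) \<omega>) \<in> borel_measurable M"
    using measurable_Pair2[OF G_meas, of "\<lambda>_. undefined"] by (simp add: Pt_0)
  with assms(3) borel_measurable_poly_val[OF assms(1) R] show ?thesis
    using F G p unfolding pmoment_def Lp_L2_dist_0 poly_deriv_0
    by (intro AE_eq_of_Lp_limits[where Y="\<lambda>m. poly_val W (R m)"]) auto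
qed

lemma uniformly_Lp_bounded_malliavin_0:
  assumes M: "prob_space M" and "isonormal M W"
    and F: "\<And>n j. j \<in> {1..n} \<Longrightarrow> F n j \<in> borel_measurable M"
    and density: "\<And>n j. j \<in> {1..n} \<Longrightarrow> malliavin_density M W (F n j) 0 (G n j)"
    and bound: "\<And>p. 1 < p \<Longrightarrow> \<exists>C. \<forall>n j. j \<in> {1..n} \<longrightarrow> (\<forall>ts\<in>cube 0. pmoment M p (G n j ts) \<le> ennreal C)"
  shows "uniformly_Lp_bounded M (\<lambda>n. {1..n}) F"
proof (rule prob_space.uniformly_Lp_boundedI[OF M F])
  fix p :: nat assume p: "2 \<le> p"
  obtain C where C: "\<forall>n j. j \<in> {1..n} \<longrightarrow> (\<forall>ts\<in>cube 0. pmoment M (real p) (G n j ts) \<le> ennreal C)"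
    using bound[of "real p"] p by auto
  have "(\<integral>\<^sup>+\<omega>. ennreal (\<bar>F n j \<omega>\<bar> ^ p) \<partial>M) \<le> ennreal C" if j: "j \<in> {1..n}" for n j
  proof -
    have "AE \<omega> in M. F n j \<omega> = G n j (\<lambda>_. undefined) \<omega>"
      by (rule malliavin_density_0_AE_eq[OF assms(2) density[OF j] F[OF j]])
    then have "(\<integral>\<^sup>+\<omega>. ennreal (\<bar>F n j \<omega>\<bar> ^ p) \<partial>M) = pmoment M (real p) (G n j (\<lambda>_. undefined))"
      unfolding pmoment_def using p by (intro nn_integral_cong_AE) (auto elim!: eventually_mono simp: powr_realpow')
    also have "\<dots> \<le> ennreal C" using C j by (simp add: cube_def)
    finally show ?thesis .
  qed
  then show "\<exists>C. \<forall>n. \<forall>j\<in>{1..n}. (\<integral>\<^sup>+\<omega>. ennreal (\<bar>F n j \<omega>\<bar> ^ p) \<partial>M) \<le> ennreal C" by blast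
qed

lemma uniformly_Lp_bounded_families:
  assumes M: "prob_space M" and iso: "isonormal M W" and C1: "cond_C1 M W Q a Da" and q: "q \<in> Q"
    and density: "\<And>n j i. j \<in> {1..n} \<Longrightarrow> malliavin_density M W (a n j q) i (Da n j q i)"
  shows "uniformly_Lp_bounded M (\<lambda>n. {1..n}) (\<lambda>n j. a n j q)"
    and "uniformly_Lp_bounded M (\<lambda>n. {1..n} \<times> {1..n}) (\<lambda>n (j, k) \<omega>. real n * D1 n k (Da n j q 1) \<omega>)"
    and "uniformly_Lp_bounded M (\<lambda>n. {1..n} \<times> {1..n}) (\<lambda>n (j, k) \<omega>. (real n)\<^sup>2 * D11 n k (Da n j q 2) \<omega>)"
    and "uniformly_Lp_bounded M (\<lambda>n. {1..n}) (\<lambda>n k \<omega>. real n * D1 n k (Da n k q 1) \<omega>)"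
    and "uniformly_Lp_bounded M (\<lambda>n. {1..n}) (\<lambda>n k \<omega>. (real n)\<^sup>2 * D11 n k (Da n k q 2) \<omega>)"
proof -
  have bound: "\<And>i p. 1 < p \<Longrightarrow> \<exists>C. \<forall>n j. j \<in> {1..n} \<longrightarrow> (\<forall>ts\<in>cube i. pmoment M p (Da n j q i ts) \<le> ennreal C)"
    using C1 q unfolding cond_C1_def by blast
  have Da: "\<And>n j i. j \<in> {1..n} \<Longrightarrow> (\<lambda>(ts, \<omega>). Da n j q i ts \<omega>) \<in> borel_measurable (Pt i \<Otimes>\<^sub>M M)"
    using density unfolding malliavin_density_def by blast
  have "\<And>n j. j \<in> {1..n} \<Longrightarrow> a n j q \<in> borel_measurable M"
    using C1 q unfolding cond_C1_def in_Dinf_def by blast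
  then show "uniformly_Lp_bounded M (\<lambda>n. {1..n}) (\<lambda>n j. a n j q)"
    by (rule uniformly_Lp_bounded_malliavin_0[OF M iso _ density bound])
  show D1: "uniformly_Lp_bounded M (\<lambda>n. {1..n} \<times> {1..n}) (\<lambda>n (j, k) \<omega>. real n * D1 n k (Da n j q 1) \<omega>)"
    using uniformly_Lp_bounded_scaled_cell_integral[OF M Da bound, of 1] by (simp add: D1_eq_cell_integral)
  show D11: "uniformly_Lp_bounded M (\<lambda>n. {1..n} \<times> {1..n}) (\<lambda>n (j, k) \<omega>. (real n)\<^sup>2 * D11 n k (Da n j q 2) \<omega>)"
    using uniformly_Lp_bounded_scaled_cell_integral[OF M Da bound, of 2] by (simp add: D11_eq_cell_integral)
  show "uniformly_Lp_bounded M (\<lambda>n. {1..n}) (\<lambda>n k \<omega>. real n * D1 n k (Da n k q 1) \<omega>)"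
    using uniformly_Lp_bounded_reindex[OF D1, of "\<lambda>n. {1..n}" "\<lambda>n k. (k, k)"] by simp
  show "uniformly_Lp_bounded M (\<lambda>n. {1..n}) (\<lambda>n k \<omega>. (real n)\<^sup>2 * D11 n k (Da n k q 2) \<omega>)"
    using uniformly_Lp_bounded_reindex[OF D11, of "\<lambda>n. {1..n}" "\<lambda>n k. (k, k)"] by simp
qed

subsection \<open>The conditions [A] and [A']\<close>

definition cond_A_limits :: "'a measure \<Rightarrow> nat set \<Rightarrow> (nat \<Rightarrow> nat \<Rightarrow> nat \<Rightarrow> 'a \<Rightarrow> real)
    \<Rightarrow> (nat \<Rightarrow> nat \<Rightarrow> nat \<Rightarrow> nat \<Rightarrow> (nat \<Rightarrow> real) \<Rightarrow> 'a \<Rightarrow> real)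
    \<Rightarrow> (real \<Rightarrow> nat \<Rightarrow> 'a \<Rightarrow> real) \<Rightarrow> (real \<Rightarrow> real \<Rightarrow> nat \<Rightarrow> 'a \<Rightarrow> real)
    \<Rightarrow> (real \<Rightarrow> real \<Rightarrow> nat \<Rightarrow> 'a \<Rightarrow> real) \<Rightarrow> (real \<Rightarrow> 'a \<Rightarrow> real) \<Rightarrow> (real \<Rightarrow> 'a \<Rightarrow> real) \<Rightarrow> bool"
  where "cond_A_limits M Q a Da af ar arr ad add \<longleftrightarrow> (\<forall>q\<in>Q.
    interval_conv_in_measure M (\<lambda>n j. a n j q) (\<lambda>s. af s q) \<and>
    square_conv_in_measure M (\<lambda>n j k \<omega>. real n * D1 n k (Da n j q 1) \<omega>) (\<lambda>t s. ar t s q) \<and>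
    (2 \<in> Q \<longrightarrow> interval_conv_in_measure M (\<lambda>n k \<omega>. real n * D1 n k (Da n k 2 1) \<omega>) ad) \<and>
    square_conv_in_measure M (\<lambda>n j k \<omega>. (real n)\<^sup>2 * D11 n k (Da n j q 2) \<omega>) (\<lambda>t s. arr t s q) \<and>
    (2 \<in> Q \<longrightarrow> interval_conv_in_measure M (\<lambda>n j \<omega>. (real n)\<^sup>2 * D11 n j (Da n j 2 2) \<omega>) add))"

definition cond_A'_limits :: "real \<Rightarrow> 'a measure \<Rightarrow> nat set \<Rightarrow> (nat \<Rightarrow> nat \<Rightarrow> nat \<Rightarrow> 'a \<Rightarrow> real)
    \<Rightarrow> (nat \<Rightarrow> nat \<Rightarrow> nat \<Rightarrow> nat \<Rightarrow> (nat \<Rightarrow> real) \<Rightarrow> 'a \<Rightarrow> real)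
    \<Rightarrow> (real \<Rightarrow> nat \<Rightarrow> 'a \<Rightarrow> real) \<Rightarrow> (real \<Rightarrow> real \<Rightarrow> nat \<Rightarrow> 'a \<Rightarrow> real)
    \<Rightarrow> (real \<Rightarrow> real \<Rightarrow> nat \<Rightarrow> 'a \<Rightarrow> real) \<Rightarrow> (real \<Rightarrow> 'a \<Rightarrow> real) \<Rightarrow> (real \<Rightarrow> 'a \<Rightarrow> real) \<Rightarrow> bool"
  where "cond_A'_limits r M Q a Da af ar arr ad add \<longleftrightarrow> (\<forall>q\<in>Q.
    interval_conv_Lr r M (\<lambda>n j. a n j q) (\<lambda>s. af s q) \<and>
    square_conv_Lr r M (\<lambda>n j k \<omega>. real n * D1 n k (Da n j q 1) \<omega>) (\<lambda>t s. ar t s q) \<and>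
    (2 \<in> Q \<longrightarrow> interval_conv_Lr r M (\<lambda>n k \<omega>. real n * D1 n k (Da n k 2 1) \<omega>) ad) \<and>
    square_conv_Lr r M (\<lambda>n j k \<omega>. (real n)\<^sup>2 * D11 n k (Da n j q 2) \<omega>) (\<lambda>t s. arr t s q) \<and>
    (2 \<in> Q \<longrightarrow> interval_conv_Lr r M (\<lambda>n j \<omega>. (real n)\<^sup>2 * D11 n j (Da n j 2 2) \<omega>) add))"

text \<open>In cond_A the condition on add integrates over s an integrand not depending on s;
  nn_integral_cmult_indicator removes that integral.\<close>
lemma cond_A_eq:
  "cond_A M W Q a Da Ginf DG X DX af ar arr ad add \<longleftrightarrow> cond_C1 M W Q a Da \<and> cond_C2 M W Q a Ginf DG
    \<and> cond_C3 M W X DX \<and> cond_A_limits M Q a Da af ar arr ad add"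
  unfolding cond_A_def cond_A_limits_def interval_conv_in_measure_def square_conv_in_measure_def
  by (simp add: nn_integral_cmult_indicator) blast

lemma cond_A'_eq:
  "cond_A' r M W Q a Da Ginf DG X DX af ar arr ad add \<longleftrightarrow> cond_C1 M W Q a Da \<and> cond_C2 M W Q a Ginf DG
    \<and> cond_C3 M W X DX \<and> cond_A'_limits r M Q a Da af ar arr ad add"
  unfolding cond_A'_def cond_A'_limits_def interval_conv_Lr_def square_conv_Lr_def ..

lemma cond_A_limits_iff_cond_A'_limits:
  assumes M: "prob_space M" and iso: "isonormal M W" and C1: "cond_C1 M W Q a Da"
    and density: "\<And>n j q i. j \<in> {1..n} \<Longrightarrow> q \<in> Q \<Longrightarrow> malliavin_density M W (a n j q) i (Da n j q i)"
    and af: "\<And>q. q \<in> Q \<Longrightarrow> (\<lambda>(t, \<omega>). af t q \<omega>) \<in> borel_measurable (lborel \<Otimes>\<^sub>M M)"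
    and ar: "\<And>q. q \<in> Q \<Longrightarrow> (\<lambda>((t, s), \<omega>). ar t s q \<omega>) \<in> borel_measurable ((lborel \<Otimes>\<^sub>M lborel) \<Otimes>\<^sub>M M)"
    and arr: "\<And>q. q \<in> Q \<Longrightarrow> (\<lambda>((t, s), \<omega>). arr t s q \<omega>) \<in> borel_measurable ((lborel \<Otimes>\<^sub>M lborel) \<Otimes>\<^sub>M M)"
    and ad: "2 \<in> Q \<Longrightarrow> (\<lambda>(t, \<omega>). ad t \<omega>) \<in> borel_measurable (lborel \<Otimes>\<^sub>M M)"
    and add: "2 \<in> Q \<Longrightarrow> (\<lambda>(t, \<omega>). add t \<omega>) \<in> borel_measurable (lborel \<Otimes>\<^sub>M M)"
    and r: "0 < r"
  shows "cond_A_limits M Q a Da af ar arr ad add \<longleftrightarrow> cond_A'_limits r M Q a Da af ar arr ad add"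
proof -
  note bounded = uniformly_Lp_bounded_families[OF M iso C1 _ density]
  have "interval_conv_in_measure M (\<lambda>n j. a n j q) (\<lambda>s. af s q)
      \<longleftrightarrow> interval_conv_Lr r M (\<lambda>n j. a n j q) (\<lambda>s. af s q)" if "q \<in> Q" for q
    using that by (intro interval_conv_in_measure_iff_Lr[OF M _ af r] bounded)
  moreover have "square_conv_in_measure M (\<lambda>n j k \<omega>. real n * D1 n k (Da n j q 1) \<omega>) (\<lambda>t s. ar t s q)
      \<longleftrightarrow> square_conv_Lr r M (\<lambda>n j k \<omega>. real n * D1 n k (Da n j q 1) \<omega>) (\<lambda>t s. ar t s q)" if "q \<in> Q" for q
    using that by (intro square_conv_in_measure_iff_Lr[OF M _ ar r] bounded)
  moreover have "square_conv_in_measure M (\<lambda>n j k \<omega>. (real n)\<^sup>2 * D11 n k (Da n j q 2) \<omega>) (\<lambda>t s. arr t s q)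
      \<longleftrightarrow> square_conv_Lr r M (\<lambda>n j k \<omega>. (real n)\<^sup>2 * D11 n k (Da n j q 2) \<omega>) (\<lambda>t s. arr t s q)" if "q \<in> Q" for q
    using that by (intro square_conv_in_measure_iff_Lr[OF M _ arr r] bounded)
  moreover have "interval_conv_in_measure M (\<lambda>n k \<omega>. real n * D1 n k (Da n k 2 1) \<omega>) ad
      \<longleftrightarrow> interval_conv_Lr r M (\<lambda>n k \<omega>. real n * D1 n k (Da n k 2 1) \<omega>) ad" if "2 \<in> Q"
    using that by (intro interval_conv_in_measure_iff_Lr[OF M _ ad r] bounded)
  moreover have "interval_conv_in_measure M (\<lambda>n j \<omega>. (real n)\<^sup>2 * D11 n j (Da n j 2 2) \<omega>) add
      \<longleftrightarrow> interval_conv_Lr r M (\<lambda>n j \<omega>. (real n)\<^sup>2 * D11 n j (Da n j 2 2) \<omega>) add" if "2 \<in> Q"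
    using that by (intro interval_conv_in_measure_iff_Lr[OF M _ add r] bounded)
  ultimately show ?thesis unfolding cond_A_limits_def cond_A'_limits_def by blast
qed

theorem lemma8p1:
  fixes M :: "'a measure"
    and W :: "(real \<Rightarrow> real) \<Rightarrow> 'a \<Rightarrow> real"
    and Q :: "nat set"
    and a :: "nat \<Rightarrow> nat \<Rightarrow> nat \<Rightarrow> 'a \<Rightarrow> real"
    and Da :: "nat \<Rightarrow> nat \<Rightarrow> nat \<Rightarrow> nat \<Rightarrow> (nat \<Rightarrow> real) \<Rightarrow> 'a \<Rightarrow> real"
    and Ginf :: "'a \<Rightarrow> real" and DG :: "nat \<Rightarrow> (nat \<Rightarrow> real) \<Rightarrow> 'a \<Rightarrow> real"
    and X :: "'a \<Rightarrow> real" and DX :: "nat \<Rightarrow> (nat \<Rightarrow> real) \<Rightarrow> 'a \<Rightarrow> real"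
    and af :: "real \<Rightarrow> nat \<Rightarrow> 'a \<Rightarrow> real"
    and ar arr :: "real \<Rightarrow> real \<Rightarrow> nat \<Rightarrow> 'a \<Rightarrow> real"
    and ad add :: "real \<Rightarrow> 'a \<Rightarrow> real"
  assumes "prob_space M"
    and "isonormal M W"
    and "finite Q" and "Q \<subseteq> {2..}"
    and "\<And>q. q \<in> Q \<Longrightarrow> (\<lambda>(t, \<omega>). af t q \<omega>) \<in> borel_measurable (lborel \<Otimes>\<^sub>M M)"
    and "\<And>q. q \<in> Q \<Longrightarrow> (\<lambda>((t, s), \<omega>). ar t s q \<omega>) \<in> borel_measurable ((lborel \<Otimes>\<^sub>M lborel) \<Otimes>\<^sub>M M)"
    and "\<And>q. q \<in> Q \<Longrightarrow> (\<lambda>((t, s), \<omega>). arr t s q \<omega>) \<in> borel_measurable ((lborel \<Otimes>\<^sub>M lborel) \<Otimes>\<^sub>M M)"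
    and "2 \<in> Q \<Longrightarrow> (\<lambda>(t, \<omega>). ad t \<omega>) \<in> borel_measurable (lborel \<Otimes>\<^sub>M M)"
    and "2 \<in> Q \<Longrightarrow> (\<lambda>(t, \<omega>). add t \<omega>) \<in> borel_measurable (lborel \<Otimes>\<^sub>M M)"
    and "\<And>\<omega>. \<omega> \<in> space M \<Longrightarrow>
           Ginf \<omega> = (\<Sum>q\<in>Q. fact q * (\<integral>t\<in>{0..1}. (af t q \<omega>)\<^sup>2 \<partial>lborel))"
    and "\<And>n j q i. j \<in> {1..n} \<Longrightarrow> q \<in> Q \<Longrightarrow> malliavin_density M W (a n j q) i (Da n j q i)"
    and "\<And>i. malliavin_density M W Ginf i (DG i)"
    and "\<And>i. malliavin_density M W X i (DX i)"
  shows "(cond_A M W Q a Da Ginf DG X DX af ar arr ad add \<longleftrightarrow>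
            (\<exists>r>0. cond_A' r M W Q a Da Ginf DG X DX af ar arr ad add)) \<and>
         (cond_A M W Q a Da Ginf DG X DX af ar arr ad add \<longleftrightarrow>
            (\<forall>r>0. cond_A' r M W Q a Da Ginf DG X DX af ar arr ad add))"
proof -
  \<comment> \<open>(C2) and (C3) occur verbatim on both sides.\<close>
  have "cond_A M W Q a Da Ginf DG X DX af ar arr ad add \<longleftrightarrow> cond_A' r M W Q a Da Ginf DG X DX af ar arr ad add"
    if "0 < r" for r
    unfolding cond_A_eq cond_A'_eq
    using cond_A_limits_iff_cond_A'_limits[where Q=Q and a=a and Da=Da and af=af and ar=ar and arr=arr,
        OF assms(1,2) _ assms(11) assms(5-9) that]
    by blast
  then show ?thesis by (meson zero_less_one)
qed

end
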